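(* Let $H=H^{\dagger}\in\mathcal{M}_2(\mathbb{C})$ and let $A\in\mathcal{M}_3(\mathbb{C})$ be positive semidefinite with spectral decomposition $A=\sum_{k=1}^{3}\lambda_k A_k$ ($\lambda_k\geq 0$, $A_k$ rank-one spectral projectors). Define superoperators on $\mathcal{M}_2(\mathbb{C})$ by $\mathcal{L}_0(\rho)=-i[H,\rho]$, $\lambda_0=1$, and for $k=1,2,3$ $$\mathcal{L}_k(\rho)=\frac12\sum_{i,j=1}^{3}(A_k)_{ij}\big([\sigma_i,\rho\sigma_j]+[\sigma_i\rho,\sigma_j]\big),$$ set $\hat{\mathcal{L}}_k=\lambda_k\mathcal{L}_k$ ($k=0,\dots,3$) and $\Lambda=\max_{k}\|\hat{\mathcal{L}}_k\|_{1\to1}$. For $\alpha\geq0$ let $$S_2(\alpha)=e^{\frac{\alpha}{2}\hat{\mathcal{L}}_0}e^{\frac{\alpha}{2}\hat{\mathcal{L}}_1}e^{\frac{\alpha}{2}\hat{\mathcal{L}}_2}e^{\frac{\alpha}{2}\hat{\mathcal{L}}_3}e^{\frac{\alpha}{2}\hat{\mathcal{L}}_3}e^{\frac{\alpha}{2}\hat{\mathcal{L}}_2}e^{\frac{\alpha}{2}\hat{\mathcal{L}}_1}e^{\frac{\alpha}{2}\hat{\mathcal{L}}_0}.$$ Let $t>0$, let $N$ be a positive integer and $\tau=t/N$. Then $$\Big\|\exp\Big(\tau\sum_{k=0}^{3}\hat{\mathcal{L}}_k\Big)-S_2(\tau)\Big\|_{1\to1}\leq\frac{(4t\Lambda)^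3}{3N^3}.$$
   Context: $\sigma_1,\sigma_2,\sigma_3$ are the Pauli matrices. For a linear map $T$ on $\mathcal{M}_2(\mathbb{C})$, $\|T\|_{1\to1}=\sup_{\|X\|_1=1}\|T(X)\|_1$ with $\|X\|_1=\mathrm{tr}\sqrt{X^{\dagger}X}$, the supremum over all $X\in\mathcal{M}_2(\mathbb{C})$. Products of superoperators denote composition; exponentials are defined by power series. *)

theory Defs
  imports "HOL-Analysis.Analysis"
begin

type_synonym cmat2 = "complex^2^2"
type_synonym superop = "cmat2 \<Rightarrow> cmat2"

definition cadj :: "complex^'n^'n \<Rightarrow> complex^'n^'n" where
  "cadj X = (\<chi> i j. cnj (X$j$i))"

definition cscale :: "complex \<Rightarrow> complex^'n^'n \<Rightarrow> complex^'n^'n" where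
  "cscale c X = (\<chi> i j. c * X$i$j)"

definition comm :: "complex^'n^'n \<Rightarrow> complex^'n^'n \<Rightarrow> complex^'n^'n" where
  "comm X Y = X ** Y - Y ** X"

definition psd :: "complex^'n^'n \<Rightarrow> bool" where
  "psd X \<longleftrightarrow> cadj X = X \<and>
     (\<forall>v::complex^'n. 0 \<le> Re (\<Sum>i\<in>UNIV. \<Sum>j\<in>UNIV. cnj (v$i) * X$i$j * v$j))"

definition msqrt :: "complex^'n^'n \<Rightarrow> complex^'n^'n" where
  "msqrt X = (THE R. psd R \<and> R ** R = X)"

definition trace_norm :: "complex^'n^'n \<Rightarrow> real" where
  "trace_norm X = Re (trace (msqrt (cadj X ** X)))"

definition norm11 :: "superop \<Rightarrow> real" where
  "norm11 T = Sup {trace_norm (T X) | X. trace_norm X = 1}"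

definition sexp :: "superop \<Rightarrow> superop" where
  "sexp T = (\<lambda>X. \<Sum>n. (1 / fact n) *\<^sub>R (T ^^ n) X)"

text \<open>Pauli matrices sigma_1, sigma_2, sigma_3, indexed by the elements 1, 2, 3 of type 3.\<close>
definition sigma1 :: cmat2 where "sigma1 = vector [vector [0, 1], vector [1, 0]]"
definition sigma2 :: cmat2 where "sigma2 = vector [vector [0, -\<i>], vector [\<i>, 0]]"
definition sigma3 :: cmat2 where "sigma3 = vector [vector [1, 0], vector [0, -1]]"

definition pauli :: "3 \<Rightarrow> cmat2" where
  "pauli i = (if i = 1 then sigma1 else if i = 2 then sigma2 else sigma3)"

definition L0 :: "cmat2 \<Rightarrow> superop" where
  "L0 H = (\<lambda>\<rho>. cscale (-\<i>) (comm H \<rho>))"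

definition Lk :: "complex^3^3 \<Rightarrow> superop" where
  "Lk B = (\<lambda>\<rho>. cscale (1/2) (\<Sum>i\<in>UNIV. \<Sum>j\<in>UNIV.
      cscale (B$i$j) (comm (pauli i) (\<rho> ** pauli j) + comm (pauli i ** \<rho>) (pauli j))))"

definition outer :: "complex^3 \<Rightarrow> complex^3^3" where
  "outer v = (\<chi> i j. v$i * cnj (v$j))"

end

theory Submission
  imports Defs
begin

text \<open>
  The generators are dissipative for the trace norm: if W is unitary and W X is positive
  semidefinite, so that Re tr (W _) is a norming functional of X, then Re tr (W (L X)) <= 0.
  Since exp (d A) agrees with the resolvent (1 - d A)^-1 up to O(d^2), and resolvents of dissipative
  maps do not increase the trace norm, every exp (s L) with s >= 0 is a trace-norm contraction.
  The error exp (tau L) - S2 (tau) and its first two derivatives in tau vanish at 0 because the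
  splitting is symmetric, while its third derivative, a sum of products of contractions and
  generators, has norm at most 2 (sum_k ||L_k||)^3 <= 2 (4 Lambda)^3. Taylor's theorem, applied to
  Re tr (W (_) X) for a norming W of the error, bounds the error by
  2 (4 Lambda)^3 tau^3 / 3! = (4 t Lambda)^3 / (3 N^3).
\<close>

section \<open>Conjugate transposes and positive semidefinite matrices\<close>

lemma cadj_nth [simp]: "cadj X $ i $ j = cnj (X $ j $ i)"
  by (simp add: cadj_def)

lemma cscale_nth [simp]: "cscale c X $ i $ j = c * X $ i $ j"
  by (simp add: cscale_def)

lemma cadj_cadj [simp]: "cadj (cadj X) = X"
  by (simp add: vec_eq_iff)

lemma cadj_add: "cadj (X + Y) = cadj X + cadj Y"
  by (simp add: vec_eq_iff)

lemma cadj_diff: "cadj (X - Y) = cadj X - cadj Y"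
  by (simp add: vec_eq_iff)

lemma cadj_mult: "cadj (X ** Y) = cadj Y ** cadj X"
  by (simp add: vec_eq_iff matrix_matrix_mult_def mult.commute)

lemma cadj_mat_one [simp]: "cadj (mat 1) = mat 1"
  by (simp add: vec_eq_iff mat_def)

lemma trace_cadj: "trace (cadj X) = cnj (trace X)"
  by (simp add: trace_def)

lemma trace_cscale: "trace (cscale c X) = c * trace X"
  by (simp add: trace_def sum_distrib_left)

lemma trace_scaleR: "trace (r *\<^sub>R (X :: complex^'n^'n)) = of_real r * trace X"
  by (simp add: trace_def sum_distrib_left) (simp add: scaleR_conv_of_real)

lemma matrix_diff_ldistrib: "(A :: 'a::ring_1^'n^'m) ** (B - C) = A ** B - A ** C"
  by (simp add: vec_eq_iff matrix_matrix_mult_def sum_subtractf right_diff_distrib)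

lemma matrix_diff_rdistrib: "((A :: 'a::ring_1^'n^'m) - B) ** C = A ** C - B ** C"
  by (simp add: vec_eq_iff matrix_matrix_mult_def sum_subtractf left_diff_distrib)

lemma matrix_add_rdistrib: "((A :: 'a::semiring_1^'n^'m) + B) ** C = A ** C + B ** C"
  by (simp add: vec_eq_iff matrix_matrix_mult_def sum.distrib distrib_right)

lemma matrix_cscale_left: "cscale c A ** B = cscale c (A ** B)"
  by (simp add: vec_eq_iff matrix_matrix_mult_def sum_distrib_left mult.assoc)

lemma matrix_cscale_right: "A ** cscale c B = cscale c (A ** B)"
  by (simp add: vec_eq_iff matrix_matrix_mult_def sum_distrib_left mult_ac)

lemma matrix_mult_uminus_right: "(A::'a::ring_1^'n^'m) ** (- B) = - (A ** B)"
  by (simp add: vec_eq_iff matrix_matrix_mult_def sum_negf)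

lemma trace_uminus: "trace (- (A::'a::ring_1^'n^'n)) = - trace A"
  by (simp add: trace_def sum_negf)

lemma cscale_cscale: "cscale a (cscale b X) = cscale (a * b) X"
  by (simp add: vec_eq_iff mult.assoc)

lemma cscale_mat: "cscale c (mat d) = mat (c * d)"
  by (simp add: vec_eq_iff mat_def)

lemma cscale_one [simp]: "cscale 1 X = X"
  by (simp add: vec_eq_iff)

lemma cscale_zero [simp]: "cscale 0 X = 0"
  by (simp add: vec_eq_iff)

lemma cadj_cscale: "cadj (cscale c X) = cscale (cnj c) (cadj X)"
  by (simp add: vec_eq_iff)

lemma cscale_mult_cscale: "cscale a X ** cscale b Y = cscale (a * b) (X ** Y)"
  by (simp add: matrix_cscale_left matrix_cscale_right cscale_cscale mult.commute)

lemma Im_trace_hermitian_mult: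
  assumes "cadj A = A" "cadj B = B"
  shows "Im (trace (A ** B)) = 0"
proof -
  have "cnj (trace (A ** B)) = trace (A ** B)"
    by (metis assms cadj_mult trace_cadj trace_mul_sym)
  then have "Im (cnj (trace (A ** B))) = Im (trace (A ** B))"
    by simp
  then show ?thesis
    by simp
qed

lemma bounded_linear_Re_trace_mult: "bounded_linear (\<lambda>Y::complex^'n^'n. Re (trace (W ** Y)))"
  unfolding linear_conv_bounded_linear[symmetric]
  by (rule linearI) (simp_all add: matrix_add_ldistrib trace_add matrix_scalar_ac trace_scaleR
      flip: scalar_matrix_assoc)

lemma psd_hermitian: "psd P \<Longrightarrow> cadj P = P"
  by (simp add: psd_def)

lemma quadratic_form_eq_inner:
  "(\<Sum>i\<in>UNIV. \<Sum>j\<in>UNIV. cnj (v$i) * X$i$j * v$j) = (\<Sum>i\<in>UNIV. cnj (v$i) * (X *v v)$i)"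
  by (simp add: matrix_vector_mult_def sum_distrib_left mult.assoc)

lemma inner_cadj_mult:
  "(\<Sum>i\<in>UNIV. cnj (v$i) * (cadj M *v w)$i) = (\<Sum>k\<in>UNIV. cnj ((M *v v)$k) * w$k)"
proof -
  have "(\<Sum>i\<in>UNIV. cnj (v$i) * (cadj M *v w)$i) = (\<Sum>i\<in>UNIV. \<Sum>k\<in>UNIV. cnj (v$i) * cnj (M$k$i) * w$k)"
    by (simp add: matrix_vector_mult_def sum_distrib_left mult.assoc)
  also have "\<dots> = (\<Sum>k\<in>UNIV. \<Sum>i\<in>UNIV. cnj (v$i) * cnj (M$k$i) * w$k)"
    by (rule sum.swap)
  also have "\<dots> = (\<Sum>k\<in>UNIV. cnj ((M *v v)$k) * w$k)"
    by (simp add: matrix_vector_mult_def cnj_sum sum_distrib_left sum_distrib_right mult_ac)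
  finally show ?thesis .
qed

lemma quadratic_form_congruence:
  "(\<Sum>i\<in>UNIV. \<Sum>j\<in>UNIV. cnj (v$i) * (cadj M ** P ** M)$i$j * v$j) =
    (\<Sum>k\<in>UNIV. \<Sum>l\<in>UNIV. cnj ((M *v v)$k) * P$k$l * (M *v v)$l)"
  by (simp only: quadratic_form_eq_inner inner_cadj_mult matrix_vector_mul_assoc[symmetric])

lemma psd_congruence:
  assumes "psd P"
  shows "psd (cadj M ** P ** M)"
  unfolding psd_def
proof
  show "cadj (cadj M ** P ** M) = cadj M ** P ** M"
    using psd_hermitian[OF assms] by (simp add: cadj_mult matrix_mul_assoc)
  show "\<forall>v. 0 \<le> Re (\<Sum>i\<in>UNIV. \<Sum>j\<in>UNIV. cnj (v$i) * (cadj M ** P ** M)$i$j * v$j)"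
    using assms by (simp add: quadratic_form_congruence psd_def)
qed

lemma psd_mat_one: "psd (mat 1)"
  unfolding psd_def
proof (intro conjI allI)
  show "cadj (mat 1) = (mat 1 :: complex^'n^'n)"
    by simp
  fix v :: "complex^'n"
  have "(\<Sum>i\<in>UNIV. \<Sum>j\<in>UNIV. cnj (v$i) * (mat 1 :: complex^'n^'n)$i$j * v$j) =
      (\<Sum>i\<in>UNIV. cnj (v$i) * v$i)"
    by (simp add: mat_def if_distrib if_distribR cong: if_cong)
  then show "0 \<le> Re (\<Sum>i\<in>UNIV. \<Sum>j\<in>UNIV. cnj (v$i) * (mat 1 :: complex^'n^'n)$i$j * v$j)"
    by (simp add: sum_nonneg)
qed

lemma psd_gram: "psd (cadj X ** X)"
  using psd_congruence[OF psd_mat_one, of X] by simp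

lemma psd_add:
  fixes A B :: "complex^'n^'n"
  assumes "psd A" "psd B"
  shows "psd (A + B)"
  unfolding psd_def
proof (intro conjI allI)
  show "cadj (A + B) = A + B"
    using psd_hermitian[OF assms(1)] psd_hermitian[OF assms(2)] by (simp add: cadj_add)
  fix v :: "complex^'n"
  have "(\<Sum>i\<in>UNIV. \<Sum>j\<in>UNIV. cnj (v$i) * (A + B)$i$j * v$j) =
      (\<Sum>i\<in>UNIV. \<Sum>j\<in>UNIV. cnj (v$i) * A$i$j * v$j) + (\<Sum>i\<in>UNIV. \<Sum>j\<in>UNIV. cnj (v$i) * B$i$j * v$j)"
    by (simp add: distrib_left distrib_right sum.distrib)
  then show "0 \<le> Re (\<Sum>i\<in>UNIV. \<Sum>j\<in>UNIV. cnj (v$i) * (A + B)$i$j * v$j)"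
    using assms by (simp add: psd_def)
qed

lemma psd_cscale:
  fixes A :: "complex^'n^'n"
  assumes "psd A" "0 \<le> r"
  shows "psd (cscale (of_real r) A)"
  unfolding psd_def
proof
  show "cadj (cscale (of_real r) A) = cscale (of_real r) A"
    using psd_hermitian[OF assms(1)] by (simp add: vec_eq_iff)
  have "(\<Sum>i\<in>UNIV. \<Sum>j\<in>UNIV. cnj (v$i) * cscale (of_real r) A $i$j * v$j) =
      of_real r * (\<Sum>i\<in>UNIV. \<Sum>j\<in>UNIV. cnj (v$i) * A$i$j * v$j)" for v :: "complex^'n"
    by (simp add: sum_distrib_left mult_ac)
  then show "\<forall>v. 0 \<le> Re (\<Sum>i\<in>UNIV. \<Sum>j\<in>UNIV. cnj (v$i) * cscale (of_real r) A $i$j * v$j)"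
    using assms by (simp add: psd_def)
qed

lemma psd_mat_of_real:
  assumes "0 \<le> r"
  shows "psd (mat (of_real r) :: complex^'n^'n)"
proof -
  have "psd (cscale (of_real r) (mat 1 :: complex^'n^'n))"
    by (rule psd_cscale[OF psd_mat_one assms])
  moreover have "cscale (of_real r) (mat 1) = (mat (of_real r) :: complex^'n^'n)"
    by (simp add: mat_def vec_eq_iff)
  ultimately show ?thesis
    by simp
qed

lemma psd_diag_nonneg:
  assumes "psd P"
  shows "0 \<le> Re (P$i$i)"
proof -
  have "\<forall>v. 0 \<le> Re (\<Sum>k\<in>UNIV. \<Sum>l\<in>UNIV. cnj (v $ k) * P$k$l * v $ l)"
    using assms by (simp add: psd_def)
  then have "0 \<le> Re (\<Sum>k\<in>UNIV. \<Sum>l\<in>UNIV. cnj (axis i 1 $ k) * P$k$l * axis i (1::complex) $ l)"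
    by (rule spec)
  also have "(\<Sum>k\<in>UNIV. \<Sum>l\<in>UNIV. cnj (axis i 1 $ k) * P$k$l * axis i (1::complex) $ l) =
      (\<Sum>k\<in>UNIV. if k = i then P$i$i else 0)"
    by (rule sum.cong[OF refl]) (simp add: axis_def if_distrib[of "(*) _"] cong: if_cong)
  also have "\<dots> = P$i$i"
    by simp
  finally show ?thesis .
qed

lemma Re_trace_psd_nonneg: "psd P \<Longrightarrow> 0 \<le> Re (trace P)"
  by (simp add: trace_def sum_nonneg psd_diag_nonneg)

lemma Re_trace_sandwich_nonneg: "psd P \<Longrightarrow> 0 \<le> Re (trace (M ** P ** cadj M))"
  using Re_trace_psd_nonneg[OF psd_congruence[of P "cadj M"]] by simp

lemma norm_sq_eq_Re_trace_gram: "(norm X)\<^sup>2 = Re (trace (cadj X ** X))"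
proof -
  have "(norm X)\<^sup>2 = (\<Sum>i\<in>UNIV. \<Sum>j\<in>UNIV. (cmod (X$i$j))\<^sup>2)"
    by (simp add: norm_vec_def L2_set_def sum_nonneg)
  also have "\<dots> = (\<Sum>j\<in>UNIV. \<Sum>i\<in>UNIV. (cmod (X$i$j))\<^sup>2)"
    by (rule sum.swap)
  also have "\<dots> = Re (trace (cadj X ** X))"
    by (simp only: cmod_power2) (simp add: trace_def matrix_matrix_mult_def power2_eq_square)
  finally show ?thesis .
qed

definition unitary :: "complex^'n^'n \<Rightarrow> bool" where
  "unitary W \<longleftrightarrow> cadj W ** W = mat 1 \<and> W ** cadj W = mat 1"

lemma unitary_mat_one: "unitary (mat 1)"
  by (simp add: unitary_def)

lemma unitary_cadj_mult_cancel: "unitary W \<Longrightarrow> cadj W ** (W ** X) = X"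
  by (simp add: unitary_def matrix_mul_assoc)

lemma unitary_mult_cadj: "unitary W \<Longrightarrow> W ** cadj W = mat 1"
  by (simp add: unitary_def)

lemma unitary_mult_cadj_cancel_right: "unitary W \<Longrightarrow> X ** cadj W ** W = X"
  by (simp add: unitary_def flip: matrix_mul_assoc)

lemma norm_unitary_mult:
  fixes W Z :: "complex^'n^'n"
  assumes "unitary W"
  shows "norm (W ** Z) = norm Z"
proof -
  have "cadj (W ** Z) ** (W ** Z) = cadj Z ** Z"
    using assms by (simp add: cadj_mult unitary_cadj_mult_cancel flip: matrix_mul_assoc)
  then have "(norm (W ** Z))\<^sup>2 = (norm Z)\<^sup>2"
    by (simp add: norm_sq_eq_Re_trace_gram)
  then show ?thesis
    by simp
qed

section \<open>The trace norm of 2x2 matrices\<close>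

definition mat2 :: "'a::zero \<Rightarrow> 'a \<Rightarrow> 'a \<Rightarrow> 'a \<Rightarrow> 'a^2^2" where
  "mat2 a b c d = vector [vector [a, b], vector [c, d]]"

lemma mat2_nth [simp]:
  "mat2 a b c d $1$1 = a" "mat2 a b c d $1$2 = b" "mat2 a b c d $2$1 = c" "mat2 a b c d $2$2 = d"
  by (simp_all add: mat2_def)

lemma mat2_eq_iff: "(X::'a^2^2) = Y \<longleftrightarrow> X$1$1 = Y$1$1 \<and> X$1$2 = Y$1$2 \<and> X$2$1 = Y$2$1 \<and> X$2$2 = Y$2$2"
  by (auto simp: vec_eq_iff forall_2)

lemma matrix_mult_2x2: "((X::'a::semiring_1^2^2) ** Y) $ i $ j = X$i$1 * Y$1$j + X$i$2 * Y$2$j"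
  by (simp add: matrix_matrix_mult_def sum_2)

lemma trace_2x2: "trace (X::'a::semiring_1^2^2) = X$1$1 + X$2$2"
  by (simp add: trace_def sum_2)

lemma mat_2x2_nth [simp]:
  "(mat k :: 'a::zero^2^2) $1$1 = k" "(mat k :: 'a::zero^2^2) $1$2 = 0"
  "(mat k :: 'a::zero^2^2) $2$1 = 0" "(mat k :: 'a::zero^2^2) $2$2 = k"
  by (simp_all add: mat_def)

lemma trace_mat_2x2: "trace (mat c :: 'a::semiring_1^2^2) = 2 * c"
  by (simp add: trace_2x2 mult_2)

lemma det_cadj_2x2: "det (cadj (X::cmat2)) = cnj (det X)"
  by (simp add: det_2 mult.commute)

lemma hermitian_2x2_real:
  assumes "cadj (R::cmat2) = R"
  shows "R$1$1 = of_real (Re (R$1$1))" "R$2$2 = of_real (Re (R$2$2))" "R$2$1 = cnj (R$1$2)"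
    "trace R = of_real (Re (trace R))" "det R = of_real (Re (R$1$1) * Re (R$2$2) - (cmod (R$1$2))\<^sup>2)"
proof -
  have e: "cnj (R$j$i) = R$i$j" for i j
    using arg_cong[OF assms, of "\<lambda>X. X$i$j"] by simp
  have im: "Im (R$1$1) = 0" "Im (R$2$2) = 0"
    using arg_cong[OF e[of 1 1], of Im] arg_cong[OF e[of 2 2], of Im] by simp_all
  then show "R$1$1 = of_real (Re (R$1$1))" "R$2$2 = of_real (Re (R$2$2))"
    by (simp_all add: complex_eq_iff)
  show r21: "R$2$1 = cnj (R$1$2)"
    using e[of 1 2] by (metis complex_cnj_cnj)
  show "trace R = of_real (Re (trace R))"
    using im by (simp add: trace_2x2 complex_eq_iff)
  show "det R = of_real (Re (R$1$1) * Re (R$2$2) - (cmod (R$1$2))\<^sup>2)"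
    using im
    by (simp add: det_2 r21 complex_eq_iff cmod_power2[unfolded power2_eq_square] power2_eq_square)
qed

lemma quadratic_form_hermitian_2x2:
  assumes "cadj (R::cmat2) = R"
  shows "Re (\<Sum>i\<in>UNIV. \<Sum>j\<in>UNIV. cnj (v$i) * R$i$j * v$j) =
    Re (R$1$1) * (cmod (v$1))\<^sup>2 + Re (R$2$2) * (cmod (v$2))\<^sup>2 + 2 * Re (cnj (v$1) * R$1$2 * v$2)"
proof -
  note h = hermitian_2x2_real[OF assms]
  have "(\<Sum>i\<in>UNIV. \<Sum>j\<in>UNIV. cnj (v$i) * R$i$j * v$j) =
      of_real (Re (R$1$1)) * (v$1 * cnj (v$1)) + of_real (Re (R$2$2)) * (v$2 * cnj (v$2))
      + (cnj (v$1) * R$1$2 * v$2 + cnj (cnj (v$1) * R$1$2 * v$2))"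
    by (simp add: sum_2 h(3) algebra_simps flip: h(1,2))
  also have "\<dots> = of_real (Re (R$1$1) * (cmod (v$1))\<^sup>2 + Re (R$2$2) * (cmod (v$2))\<^sup>2
      + 2 * Re (cnj (v$1) * R$1$2 * v$2))"
    by (simp only: complex_add_cnj complex_norm_square[symmetric] of_real_add of_real_mult of_real_power)
  finally show ?thesis
    by simp
qed

lemma psd_2x2_det_nonneg:
  assumes "psd (R::cmat2)"
  shows "0 \<le> Re (det R)"
proof -
  have herm: "cadj R = R"
    using assms by (rule psd_hermitian)
  define a c b where "a = Re (R$1$1)" and "c = Re (R$2$2)" and "b = R$1$2"
  have det: "Re (det R) = a * c - (cmod b)\<^sup>2"
    by (subst hermitian_2x2_real(5)[OF herm]) (simp add: a_def b_def c_def)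
  have q: "0 \<le> a * (cmod (v$1))\<^sup>2 + c * (cmod (v$2))\<^sup>2 + 2 * Re (cnj (v$1) * b * v$2)" for v :: "complex^2"
    using assms unfolding psd_def quadratic_form_hermitian_2x2[OF herm] a_def b_def c_def by blast
  have "0 \<le> a" "0 \<le> c"
    using psd_diag_nonneg[OF assms] by (simp_all add: a_def c_def)
  moreover have "0 \<le> a * (a * c - (cmod b)\<^sup>2)"
    using q[of "vector [- b, of_real a]"] \<open>0 \<le> a\<close>
    by (simp add: cmod_power2[unfolded power2_eq_square] power2_eq_square algebra_simps)
  moreover have "0 \<le> c * (a * c - (cmod b)\<^sup>2)"
    using q[of "vector [of_real c, - cnj b]"] \<open>0 \<le> c\<close>
    by (simp add: cmod_power2[unfolded power2_eq_square] power2_eq_square algebra_simps)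
  moreover have "0 \<le> a * c - (cmod b)\<^sup>2" if "a = 0" "c = 0"
    using q[of "vector [1, - cnj b]"] that
    by (simp add: cmod_power2[unfolded power2_eq_square] power2_eq_square algebra_simps)
  ultimately show ?thesis
    unfolding det by (cases "0 < a"; cases "0 < c") (auto simp: zero_le_mult_iff)
qed

lemma psd_2x2_Re_trace_eq_0:
  assumes "psd (R::cmat2)" "Re (trace R) = 0"
  shows "R = 0"
proof -
  have herm: "cadj R = R"
    using assms(1) by (rule psd_hermitian)
  have "Re (R$1$1) = 0" "Re (R$2$2) = 0"
    using assms psd_diag_nonneg[OF assms(1), of 1] psd_diag_nonneg[OF assms(1), of 2]
    by (simp_all add: trace_2x2)
  moreover have "0 \<le> Re (R$1$1) * Re (R$2$2) - (cmod (R$1$2))\<^sup>2"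
    using psd_2x2_det_nonneg[OF assms(1)] by (subst (asm) hermitian_2x2_real(5)[OF herm]) simp
  ultimately have "R$1$1 = 0" "R$2$2 = 0" "R$1$2 = 0"
    using hermitian_2x2_real(1,2)[OF herm] by (auto simp: complex_eq_iff)
  then show ?thesis
    using hermitian_2x2_real(3)[OF herm] by (simp add: mat2_eq_iff)
qed

lemma cayley_hamilton_2x2: "(X::cmat2) ** X = cscale (trace X) X - mat (det X)"
  by (simp add: mat2_eq_iff matrix_mult_2x2 trace_2x2 det_2 algebra_simps)

lemma square_add_sqrt_det_2x2:
  fixes M :: cmat2
  assumes "d\<^sup>2 = det M"
  shows "(M + mat d) ** (M + mat d) = cscale (trace M + 2 * d) M"
  using assms unfolding mat2_eq_iff
  by (simp add: matrix_mult_2x2 trace_2x2 det_2 power2_eq_square algebra_simps)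

text \<open>
  By Cayley-Hamilton, sqrt M = (M + sqrt (det M)) / sqrt (tr M + 2 sqrt (det M)) for M >= 0.
  For M = 0 the junk value 1 / 0 = 0 still gives the right result.
\<close>

definition sqrt_2x2 :: "cmat2 \<Rightarrow> cmat2" where
  "sqrt_2x2 M = (let d = sqrt (Re (det M)); s = sqrt (Re (trace M) + 2 * d)
     in cscale (of_real (1 / s)) (M + mat (of_real d)))"

lemma psd_sqrt_2x2: "psd M \<Longrightarrow> psd (sqrt_2x2 M)"
  unfolding sqrt_2x2_def Let_def
  by (intro psd_cscale psd_add psd_mat_of_real) (simp_all add: Re_trace_psd_nonneg psd_2x2_det_nonneg)

lemma sqrt_2x2_mult_self:
  assumes "psd M"
  shows "sqrt_2x2 M ** sqrt_2x2 M = M"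
proof -
  have herm: "cadj M = M"
    using assms by (rule psd_hermitian)
  define d where "d = sqrt (Re (det M))"
  define s where "s = sqrt (Re (trace M) + 2 * d)"
  have d0: "0 \<le> d"
    using psd_2x2_det_nonneg[OF assms] by (simp add: d_def)
  have tr0: "0 \<le> Re (trace M)"
    using assms by (rule Re_trace_psd_nonneg)
  have R: "sqrt_2x2 M = cscale (of_real (1 / s)) (M + mat (of_real d))"
    by (simp add: sqrt_2x2_def d_def s_def Let_def)
  show ?thesis
  proof (cases "s = 0")
    case True
    then have "Re (trace M) = 0"
      using tr0 d0 by (simp add: s_def)
    then show ?thesis
      unfolding R using psd_2x2_Re_trace_eq_0[OF assms] True by simp
  next
    case False
    have det: "(of_real d)\<^sup>2 = det M"
      using psd_2x2_det_nonneg[OF assms] hermitian_2x2_real(5)[OF herm]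
      by (simp add: d_def flip: of_real_power)
    have "Im (trace M) = 0"
      using hermitian_2x2_real(4)[OF herm] by (metis Im_complex_of_real)
    moreover have "s\<^sup>2 = Re (trace M) + 2 * d"
      using tr0 d0 by (simp add: s_def)
    ultimately have tr: "trace M + 2 * of_real d = of_real (s\<^sup>2)"
      by (simp add: complex_eq_iff)
    have "sqrt_2x2 M ** sqrt_2x2 M =
        cscale (of_real (1 / s\<^sup>2)) ((M + mat (of_real d)) ** (M + mat (of_real d)))"
      by (simp add: R cscale_mult_cscale power2_eq_square)
    also have "\<dots> = M"
      using False by (simp add: square_add_sqrt_det_2x2[OF det] tr cscale_cscale flip: of_real_mult)
    finally show ?thesis .
  qed
qed

lemma sqrt_2x2_square:
  assumes "psd R"
  shows "sqrt_2x2 (R ** R) = R"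
proof (cases "Re (trace R) = 0")
  case True
  then show ?thesis
    using psd_2x2_Re_trace_eq_0[OF assms] by (simp add: sqrt_2x2_def det_2)
next
  case False
  have herm: "cadj R = R"
    using assms by (rule psd_hermitian)
  define t where "t = Re (trace R)"
  define \<delta> where "\<delta> = Re (det R)"
  have t: "0 < t" "trace R = of_real t"
    using False Re_trace_psd_nonneg[OF assms] hermitian_2x2_real(4)[OF herm] by (auto simp: t_def)
  have \<delta>: "0 \<le> \<delta>" "det R = of_real \<delta>"
    using psd_2x2_det_nonneg[OF assms] hermitian_2x2_real(5)[OF herm]
    by (auto simp: \<delta>_def)
  have CH: "R ** R + mat (of_real \<delta>) = cscale (of_real t) R"
    using cayley_hamilton_2x2[of R] t(2) \<delta>(2) by simp
  have "det (R ** R) = of_real (\<delta>\<^sup>2)"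
    by (simp add: det_mul \<delta>(2) power2_eq_square)
  then have d: "sqrt (Re (det (R ** R))) = \<delta>"
    using \<delta>(1) by simp
  have "trace (R ** R) = of_real (t\<^sup>2 - 2 * \<delta>)"
    using arg_cong[OF CH, of trace] t(2)
    by (simp add: trace_add trace_cscale trace_mat_2x2 power2_eq_square algebra_simps)
  then have s: "sqrt (Re (trace (R ** R)) + 2 * \<delta>) = t"
    using t(1) by simp
  show ?thesis
    using t(1) by (simp add: sqrt_2x2_def Let_def d s CH cscale_cscale flip: of_real_mult)
qed

lemma msqrt_2x2: "psd M \<Longrightarrow> msqrt M = sqrt_2x2 M"
  unfolding msqrt_def
  by (rule the_equality) (auto simp: psd_sqrt_2x2 sqrt_2x2_mult_self sqrt_2x2_square)

lemma Re_trace_sqrt_2x2: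
  assumes "psd M"
  shows "Re (trace (sqrt_2x2 M)) = sqrt (Re (trace M) + 2 * sqrt (Re (det M)))"
proof -
  define s where "s = sqrt (Re (trace M) + 2 * sqrt (Re (det M)))"
  have "s\<^sup>2 = Re (trace M) + 2 * sqrt (Re (det M))"
    using Re_trace_psd_nonneg[OF assms] psd_2x2_det_nonneg[OF assms] by (simp add: s_def)
  moreover have "Re (trace (sqrt_2x2 M)) = (1 / s) * (Re (trace M) + 2 * sqrt (Re (det M)))"
    by (simp add: sqrt_2x2_def Let_def trace_cscale trace_add trace_mat_2x2 flip: s_def)
  ultimately have "Re (trace (sqrt_2x2 M)) = s\<^sup>2 / s"
    by simp
  also have "\<dots> = s"
    by (simp add: power2_eq_square)
  finally show ?thesis
    by (simp add: s_def)
qed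

lemma trace_norm_2x2: "trace_norm (X::cmat2) = sqrt ((norm X)\<^sup>2 + 2 * cmod (det X))"
proof -
  have "det (cadj X ** X) = of_real ((cmod (det X))\<^sup>2)"
    by (simp only: det_mul det_cadj_2x2 complex_norm_square mult.commute)
  then have "sqrt (Re (det (cadj X ** X))) = cmod (det X)"
    by simp
  then show ?thesis
    by (simp add: trace_norm_def msqrt_2x2 psd_gram Re_trace_sqrt_2x2 norm_sq_eq_Re_trace_gram)
qed

lemma trace_norm_nonneg: "0 \<le> trace_norm (X::cmat2)"
  by (simp add: trace_norm_2x2)

lemma norm_le_trace_norm: "norm (X::cmat2) \<le> trace_norm X"
  by (simp add: trace_norm_2x2 real_le_rsqrt)

lemma norm_sq_2x2:
  "(norm (X::cmat2))\<^sup>2 = (cmod (X$1$1))\<^sup>2 + (cmod (X$1$2))\<^sup>2 + (cmod (X$2$1))\<^sup>2 + (cmod (X$2$2))\<^sup>2"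
  by (simp add: norm_vec_def L2_set_def sum_2)

lemma cmod_det_2x2_le: "2 * cmod (det (X::cmat2)) \<le> (norm X)\<^sup>2"
proof -
  have "cmod (det X) \<le> cmod (X$1$1) * cmod (X$2$2) + cmod (X$1$2) * cmod (X$2$1)"
    unfolding det_2 using norm_triangle_ineq4[of "X$1$1 * X$2$2" "X$1$2 * X$2$1"]
    by (simp add: norm_mult)
  then show ?thesis
    unfolding norm_sq_2x2
    using sum_squares_bound[of "cmod (X$1$1)" "cmod (X$2$2)"]
      sum_squares_bound[of "cmod (X$1$2)" "cmod (X$2$1)"]
    by linarith
qed

lemma trace_norm_le_sqrt2_norm: "trace_norm (X::cmat2) \<le> sqrt 2 * norm X"
proof -
  have "(trace_norm X)\<^sup>2 \<le> (sqrt 2 * norm X)\<^sup>2"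
    using cmod_det_2x2_le[of X] by (simp add: trace_norm_2x2 power_mult_distrib)
  then show ?thesis
    by (simp add: power2_le_iff_abs_le)
qed

lemma trace_norm_eq_0_iff [simp]: "trace_norm (X::cmat2) = 0 \<longleftrightarrow> X = 0"
  using norm_le_trace_norm[of X] trace_norm_le_sqrt2_norm[of X] trace_norm_nonneg[of X] by auto

lemma trace_norm_zero [simp]: "trace_norm (0::cmat2) = 0"
  by simp

lemma trace_norm_scaleR: "trace_norm (r *\<^sub>R (X::cmat2)) = \<bar>r\<bar> * trace_norm X"
proof -
  have "det (r *\<^sub>R X) = r\<^sup>2 *\<^sub>R det X"
    by (simp add: det_2 power2_eq_square algebra_simps)
  then have "cmod (det (r *\<^sub>R X)) = r\<^sup>2 * cmod (det X)"
    by simp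
  then have "trace_norm (r *\<^sub>R X) = sqrt (r\<^sup>2 * ((norm X)\<^sup>2 + 2 * cmod (det X)))"
    by (simp add: trace_norm_2x2 power_mult_distrib algebra_simps)
  then show ?thesis
    by (simp add: real_sqrt_mult trace_norm_2x2)
qed

lemma unitary_cmod_det_2x2:
  assumes "unitary (W::cmat2)"
  shows "cmod (det W) = 1"
proof -
  have "cnj (det W) * det W = 1"
    using arg_cong[of _ _ det, OF conjunct1[OF assms[unfolded unitary_def]]]
    by (simp add: det_mul det_cadj_2x2)
  then have "(cmod (det W))\<^sup>2 = 1"
    by (metis complex_norm_square mult.commute of_real_eq_1_iff)
  then show ?thesis
    using norm_ge_zero[of "det W"] by (auto simp: power2_eq_1_iff)
qed

lemma trace_norm_unitary_mult: "unitary W \<Longrightarrow> trace_norm (W ** Z) = trace_norm (Z::cmat2)"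
  by (simp add: trace_norm_2x2 norm_unitary_mult det_mul norm_mult unitary_cmod_det_2x2)

lemma Re_trace_le_trace_norm: "Re (trace Z) \<le> trace_norm (Z::cmat2)"
proof -
  define a a' b b' u w where "a = Re (Z$1$1)" and "a' = Im (Z$1$1)" and "b = Re (Z$2$2)"
    and "b' = Im (Z$2$2)" and "u = cmod (Z$1$2)" and "w = cmod (Z$2$1)"
  have "a * b - a' * b' - u * w \<le> Re (det Z)"
    using complex_Re_le_cmod[of "Z$1$2 * Z$2$1"]
    by (simp add: det_2 a_def a'_def b_def b'_def u_def w_def norm_mult)
  also have "\<dots> \<le> cmod (det Z)"
    by (rule complex_Re_le_cmod)
  moreover have "(norm Z)\<^sup>2 = a\<^sup>2 + a'\<^sup>2 + u\<^sup>2 + w\<^sup>2 + b\<^sup>2 + b'\<^sup>2"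
    by (simp add: norm_sq_2x2 cmod_power2 a_def a'_def b_def b'_def u_def w_def)
  moreover have "2 * (a' * b') \<le> a'\<^sup>2 + b'\<^sup>2" "2 * (u * w) \<le> u\<^sup>2 + w\<^sup>2"
    using sum_squares_bound[of a' b'] sum_squares_bound[of u w] by simp_all
  moreover have "(a + b)\<^sup>2 = a\<^sup>2 + b\<^sup>2 + 2 * (a * b)"
    by (simp add: power2_sum)
  ultimately have "(a + b)\<^sup>2 \<le> (norm Z)\<^sup>2 + 2 * cmod (det Z)"
    by linarith
  then have "a + b \<le> trace_norm Z"
    unfolding trace_norm_2x2 by (simp add: real_le_rsqrt)
  then show ?thesis
    by (simp add: trace_2x2 a_def b_def)
qed

lemma trace_norm_uminus [simp]: "trace_norm (- X) = trace_norm (X::cmat2)"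
  using trace_norm_scaleR[of "- 1" X] by simp

lemma abs_Re_trace_unitary_mult_le:
  assumes "unitary W"
  shows "\<bar>Re (trace (W ** Z))\<bar> \<le> trace_norm (Z::cmat2)"
proof -
  have "Re (trace (W ** Z)) \<le> trace_norm Z"
    using Re_trace_le_trace_norm[of "W ** Z"] by (simp add: trace_norm_unitary_mult[OF assms])
  moreover have "- Re (trace (W ** Z)) \<le> trace_norm Z"
    using Re_trace_le_trace_norm[of "W ** (- Z)"]
    by (simp add: trace_norm_unitary_mult[OF assms] matrix_mult_uminus_right trace_uminus)
  ultimately show ?thesis
    by linarith
qed

definition adjugate_2x2 :: "'a::ring_1^2^2 \<Rightarrow> 'a^2^2" where
  "adjugate_2x2 X = mat2 (X$2$2) (- X$1$2) (- X$2$1) (X$1$1)"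

lemma adjugate_2x2_mult: "adjugate_2x2 X ** X = mat (det (X::'a::comm_ring_1^2^2))"
  by (simp add: adjugate_2x2_def mat2_eq_iff matrix_mult_2x2 det_2)

lemma norm_sq_2x2_complex:
  "of_real ((norm (X::cmat2))\<^sup>2) =
    X$1$1 * cnj (X$1$1) + X$1$2 * cnj (X$1$2) + X$2$1 * cnj (X$2$1) + X$2$2 * cnj (X$2$2)"
  unfolding norm_sq_2x2 by (simp only: of_real_add complex_norm_square)

lemma gram_cadj_add_adjugate_2x2:
  fixes X :: cmat2
  assumes "\<phi> * cnj \<phi> = 1"
  defines "N \<equiv> cadj X + cscale \<phi> (adjugate_2x2 X)"
  shows "cadj N ** N = mat (of_real ((norm X)\<^sup>2) + \<phi> * det X + cnj (\<phi> * det X))"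
    and "N ** cadj N = mat (of_real ((norm X)\<^sup>2) + \<phi> * det X + cnj (\<phi> * det X))"
proof -
  have \<phi>: "\<phi> * (cnj \<phi> * z) = z" for z
    using assms(1) by (metis mult.assoc mult_1)
  show "cadj N ** N = mat (of_real ((norm X)\<^sup>2) + \<phi> * det X + cnj (\<phi> * det X))"
    "N ** cadj N = mat (of_real ((norm X)\<^sup>2) + \<phi> * det X + cnj (\<phi> * det X))"
    unfolding mat2_eq_iff norm_sq_2x2_complex N_def
    by (simp_all add: matrix_mult_2x2 adjugate_2x2_def det_2 algebra_simps \<phi>)
qed

lemma unimodular_phase:
  obtains \<phi> :: complex where "\<phi> * cnj \<phi> = 1" "\<phi> * z = of_real (cmod z)"
proof (cases "z = 0")
  case True
  then show ?thesis
    by (intro that[of 1]) simp_all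
next
  case False
  have n: "z * cnj z = of_real (cmod z) * of_real (cmod z)"
    by (simp add: power2_eq_square flip: complex_norm_square of_real_mult)
  show ?thesis
  proof (intro that[of "cnj z / of_real (cmod z)"])
    show "cnj z / of_real (cmod z) * cnj (cnj z / of_real (cmod z)) = 1"
      using False n by (simp add: field_simps)
    show "cnj z / of_real (cmod z) * z = of_real (cmod z)"
      using False n by (simp add: field_simps mult.commute)
  qed
qed

text \<open>
  The factor W inverts the polar decomposition of X: W X = sqrt (X^dagger X), by the formula for
  \<^const>\<open>sqrt_2x2\<close>, since the adjugate satisfies adj X X = det X and the phase \<open>\<phi>\<close> makes
  \<open>\<phi>\<close> det X = |det X|.
\<close>

lemma polar_factor_2x2:
  fixes X :: cmat2
  assumes "X \<noteq> 0" "\<phi> * cnj \<phi> = 1" "\<phi> * det X = of_real (cmod (det X))"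
  defines "W \<equiv> cscale (of_real (1 / trace_norm X)) (cadj X + cscale \<phi> (adjugate_2x2 X))"
  shows "unitary W"
    and "W ** X = cscale (of_real (1 / trace_norm X)) (cadj X ** X + mat (of_real (cmod (det X))))"
proof -
  define r where "r = trace_norm X"
  have r: "0 < r" "r\<^sup>2 = (norm X)\<^sup>2 + 2 * cmod (det X)"
    using assms(1) trace_norm_nonneg[of X]
    by (simp_all add: r_def less_le) (simp add: trace_norm_2x2)
  define N where "N = cadj X + cscale \<phi> (adjugate_2x2 X)"
  have NN: "cadj N ** N = mat (of_real (r\<^sup>2))" "N ** cadj N = mat (of_real (r\<^sup>2))"
    using gram_cadj_add_adjugate_2x2[OF assms(2), of X] r(2) assms(3)
    by (simp_all add: N_def add.commute)
  show "unitary W"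
    using r(1)
    by (simp add: unitary_def W_def cadj_cscale cscale_mult_cscale NN cscale_mat power2_eq_square
        flip: N_def r_def)
  show "W ** X = cscale (of_real (1 / trace_norm X)) (cadj X ** X + mat (of_real (cmod (det X))))"
    by (simp add: W_def matrix_cscale_left matrix_add_rdistrib adjugate_2x2_mult cscale_mat
        assms(3))
qed

lemma trace_norm_polar_2x2:
  fixes X :: cmat2
  obtains W where "unitary W" "psd (W ** X)" "Re (trace (W ** X)) = trace_norm X"
proof (cases "X = 0")
  case True
  show ?thesis
  proof (rule that[of "mat 1"])
    show "psd (mat 1 ** X)"
      using True psd_mat_of_real[of 0] by simp
    show "Re (trace (mat 1 ** X)) = trace_norm X"
      using True by (simp add: trace_def)
  qed (rule unitary_mat_one)
next
  case False
  define r where "r = trace_norm X"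
  have r: "0 < r" "r\<^sup>2 = (norm X)\<^sup>2 + 2 * cmod (det X)"
    using False trace_norm_nonneg[of X] by (simp_all add: r_def less_le) (simp add: trace_norm_2x2)
  obtain \<phi> where \<phi>: "\<phi> * cnj \<phi> = 1" "\<phi> * det X = of_real (cmod (det X))"
    by (rule unimodular_phase)
  define W where "W = cscale (of_real (1 / r)) (cadj X + cscale \<phi> (adjugate_2x2 X))"
  have W: "unitary W" "W ** X = cscale (of_real (1 / r)) (cadj X ** X + mat (of_real (cmod (det X))))"
    using polar_factor_2x2[OF False \<phi>] by (simp_all add: W_def r_def)
  show ?thesis
  proof (rule that[OF W(1)])
    show "psd (W ** X)"
      unfolding W(2) using r(1) by (intro psd_cscale psd_add psd_gram psd_mat_of_real) auto
    have "Re (trace (W ** X)) = r\<^sup>2 / r"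
      unfolding W(2) r(2)
      by (simp add: trace_cscale trace_add trace_mat_2x2 norm_sq_eq_Re_trace_gram)
    then show "Re (trace (W ** X)) = trace_norm X"
      using r(1) by (simp add: r_def power2_eq_square)
  qed
qed

lemma trace_norm_triangle: "trace_norm (X + Y) \<le> trace_norm X + trace_norm (Y::cmat2)"
proof -
  obtain W where W: "unitary W" "Re (trace (W ** (X + Y))) = trace_norm (X + Y)"
    by (rule trace_norm_polar_2x2)
  then have "trace_norm (X + Y) = Re (trace (W ** X)) + Re (trace (W ** Y))"
    by (simp add: matrix_add_ldistrib trace_add)
  also have "\<dots> \<le> trace_norm X + trace_norm Y"
    using abs_Re_trace_unitary_mult_le[OF W(1), of X] abs_Re_trace_unitary_mult_le[OF W(1), of Y] by linarith
  finally show ?thesis .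
qed

section \<open>Dissipative generators\<close>

text \<open>
  If W is unitary and W X >= 0, then X = W^dagger (W X) is a polar decomposition and
  Re tr (W _) is a norming functional of X for the trace norm; so this is dissipativity in the
  sense of Lumer and Phillips.
\<close>

definition dissipative :: "(complex^'n^'n \<Rightarrow> complex^'n^'n) \<Rightarrow> bool" where
  "dissipative G \<longleftrightarrow> (\<forall>W X. unitary W \<longrightarrow> psd (W ** X) \<longrightarrow> Re (trace (W ** G X)) \<le> 0)"

definition lindblad :: "complex^'n^'n \<Rightarrow> complex^'n^'n \<Rightarrow> complex^'n^'n" where
  "lindblad V \<rho> = V ** \<rho> ** cadj V - cscale (1/2) (cadj V ** V ** \<rho> + \<rho> ** (cadj V ** V))"

lemma Re_trace_cross_le:
  fixes A V P :: "complex^'n^'n"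
  assumes "psd P"
  shows "2 * Re (trace (A ** P ** cadj V)) \<le> Re (trace (cadj A ** A ** P)) + Re (trace (V ** P ** cadj V))"
proof -
  have "trace (A ** P ** cadj A) = trace (cadj A ** A ** P)"
    using trace_mul_sym[of "A ** P" "cadj A"] trace_mul_sym[of "cadj A ** A" P]
    by (simp add: matrix_mul_assoc)
  moreover have "trace (V ** P ** cadj A) = cnj (trace (A ** P ** cadj V))"
    using psd_hermitian[OF assms] by (simp add: trace_cadj[symmetric] cadj_mult matrix_mul_assoc)
  ultimately have "trace ((A - V) ** P ** cadj (A - V)) =
      trace (cadj A ** A ** P) - trace (A ** P ** cadj V) - cnj (trace (A ** P ** cadj V))
      + trace (V ** P ** cadj V)"
    by (simp add: cadj_diff matrix_diff_ldistrib matrix_diff_rdistrib trace_sub)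
  then show ?thesis
    using Re_trace_sandwich_nonneg[OF assms, of "A - V"] by simp
qed

lemma dissipative_lindblad: "dissipative (lindblad (V::complex^'n^'n))"
  unfolding dissipative_def
proof (intro allI impI)
  fix W X :: "complex^'n^'n"
  assume W: "unitary W" and P: "psd (W ** X)"
  define P where "P = W ** X"
  define A where "A = W ** V ** cadj W"
  have X: "X = cadj W ** P"
    using W by (simp add: P_def unitary_cadj_mult_cancel)
  have "trace (W ** (V ** X ** cadj V)) = trace (A ** P ** cadj V)"
    by (simp add: A_def X matrix_mul_assoc)
  moreover have "trace (W ** (cadj V ** V ** X)) = trace (cadj A ** A ** P)"
    using W by (simp add: A_def X cadj_mult matrix_mul_assoc unitary_mult_cadj_cancel_right)
  moreover have "trace (W ** (X ** (cadj V ** V))) = trace (V ** P ** cadj V)"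
    using W trace_mul_sym[of V "P ** cadj V"] by (simp add: X matrix_mul_assoc unitary_mult_cadj)
  ultimately have "trace (W ** lindblad V X) =
      trace (A ** P ** cadj V) - (trace (cadj A ** A ** P) + trace (V ** P ** cadj V)) / 2"
    by (simp add: lindblad_def matrix_diff_ldistrib matrix_cscale_right matrix_add_ldistrib
        trace_sub trace_cscale trace_add field_simps)
  then show "Re (trace (W ** lindblad V X)) \<le> 0"
    using Re_trace_cross_le[OF P[folded P_def], of A V] by simp
qed

lemma dissipative_L0:
  assumes "cadj H = H"
  shows "dissipative (L0 H)"
  unfolding dissipative_def
proof (intro allI impI)
  fix W X :: cmat2
  assume W: "unitary W" and P: "psd (W ** X)"
  define P where "P = W ** X"
  define B where "B = W ** H ** cadj W"
  have X: "X = cadj W ** P"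
    using W by (simp add: P_def unitary_cadj_mult_cancel)
  have "trace (W ** L0 H X) = - \<i> * (trace (B ** P) - trace (P ** H))"
    using W
    by (simp add: L0_def comm_def X B_def matrix_cscale_right matrix_diff_ldistrib trace_cscale
        trace_sub matrix_mul_assoc unitary_mult_cadj)
  moreover have "Im (trace (B ** P)) = 0"
    using assms psd_hermitian[OF P]
    by (intro Im_trace_hermitian_mult) (simp_all add: B_def P_def cadj_mult matrix_mul_assoc)
  moreover have "Im (trace (P ** H)) = 0"
    using assms psd_hermitian[OF P] by (intro Im_trace_hermitian_mult) (simp_all add: P_def)
  ultimately show "Re (trace (W ** L0 H X)) \<le> 0"
    by simp
qed

lemma dissipative_add: "dissipative F \<Longrightarrow> dissipative G \<Longrightarrow> dissipative (\<lambda>X. F X + G X)"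
  unfolding dissipative_def by (simp add: matrix_add_ldistrib trace_add add_nonpos_nonpos)

lemma dissipative_cscale: "dissipative F \<Longrightarrow> 0 \<le> r \<Longrightarrow> dissipative (\<lambda>X. cscale (of_real r) (F X))"
  unfolding dissipative_def by (simp add: matrix_cscale_right trace_cscale mult_nonneg_nonpos)

lemma dissipative_sum:
  assumes "finite S" "\<And>k. k \<in> S \<Longrightarrow> dissipative (F k)"
  shows "dissipative (\<lambda>X. \<Sum>k\<in>S. F k X)"
  using assms
proof (induction S rule: finite_induct)
  case empty
  then show ?case
    by (simp add: dissipative_def trace_def)
next
  case (insert x S)
  then show ?case
    using dissipative_add[of "F x" "\<lambda>X. \<Sum>k\<in>S. F k X"] by simp
qed

lemma trace_norm_le_resolvent:
  assumes "dissipative G" "0 \<le> d"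
  shows "trace_norm Y \<le> trace_norm (Y - d *\<^sub>R G (Y::cmat2))"
proof -
  obtain W where W: "unitary W" "psd (W ** Y)" "Re (trace (W ** Y)) = trace_norm Y"
    by (rule trace_norm_polar_2x2)
  have "Re (trace (W ** G Y)) \<le> 0"
    using assms(1) W(1,2) unfolding dissipative_def by blast
  then have "trace_norm Y \<le> Re (trace (W ** (Y - d *\<^sub>R G Y)))"
    using assms(2) W(3)
    by (simp add: matrix_diff_ldistrib matrix_scalar_ac trace_sub trace_scaleR mult_nonneg_nonpos
        flip: scalar_matrix_assoc)
  also have "\<dots> \<le> trace_norm (Y - d *\<^sub>R G Y)"
    using abs_Re_trace_unitary_mult_le[OF W(1)] by (rule abs_le_D1)
  finally show ?thesis .
qed

lemma pauli_2x2: "pauli 1 = mat2 0 1 1 0" "pauli 2 = mat2 0 (- \<i>) \<i> 0" "pauli 3 = mat2 1 0 0 (- 1)"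
  by (simp_all add: pauli_def sigma1_def sigma2_def sigma3_def mat2_def)

lemma Lk_outer: "Lk (outer v) = lindblad (\<Sum>i\<in>UNIV. cscale (v$i) (pauli i))"
proof
  fix \<rho> :: cmat2
  have \<rho>: "\<rho> = mat2 (\<rho>$1$1) (\<rho>$1$2) (\<rho>$2$1) (\<rho>$2$2)"
    by (simp add: mat2_eq_iff)
  show "Lk (outer v) \<rho> = lindblad (\<Sum>i\<in>UNIV. cscale (v$i) (pauli i)) \<rho>"
    by (subst (1 2) \<rho>) (simp add: Lk_def lindblad_def outer_def comm_def sum_3 pauli_2x2 mat2_eq_iff
        matrix_mult_2x2 field_simps)
qed

lemma linear_cscale: "linear F \<Longrightarrow> linear (\<lambda>X. cscale c (F X :: complex^'n^'n))"
  by (rule linearI) (simp_all add: linear_add linear_scale vec_eq_iff distrib_left scaleR_conv_of_real mult_ac)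

lemma linear_L0: "linear (L0 H)"
  by (rule linearI) (simp_all add: L0_def comm_def mat2_eq_iff matrix_mult_2x2 algebra_simps)

lemma linear_lindblad: "linear (lindblad (V::cmat2))"
  by (rule linearI) (simp_all add: lindblad_def mat2_eq_iff matrix_mult_2x2 algebra_simps)

lemma lindblad_generator_Lk_outer:
  assumes "0 \<le> r"
  shows "linear (\<lambda>\<rho>. cscale (of_real r) (Lk (outer v) \<rho>))"
    and "dissipative (\<lambda>\<rho>. cscale (of_real r) (Lk (outer v) \<rho>))"
  using assms
  by (simp_all add: Lk_outer linear_cscale linear_lindblad dissipative_cscale dissipative_lindblad)

section \<open>Exponentials in Banach algebras\<close>

lemma exp_of_nat_scaleR: "exp (real n *\<^sub>R a) = exp a ^ n"
  for a :: "'a::{real_normed_algebra_1,banach}"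
proof (induction n)
  case (Suc n)
  have "exp (real (Suc n) *\<^sub>R a) = exp (a + real n *\<^sub>R a)"
    by (simp add: algebra_simps)
  also have "\<dots> = exp a * exp (real n *\<^sub>R a)"
    by (rule exp_add_commuting) simp
  finally show ?case
    using Suc by simp
qed simp

lemma has_vector_derivative_resolvent_exp:
  fixes A :: "'a::{real_normed_algebra_1,banach}"
  shows "((\<lambda>u. (1 - u *\<^sub>R A) * exp (u *\<^sub>R A)) has_vector_derivative - (u *\<^sub>R (A * exp (u *\<^sub>R A) * A)))
    (at u within S)"
proof -
  have "((\<lambda>u. (1 - u *\<^sub>R A) * exp (u *\<^sub>R A)) has_vector_derivative
      (1 - u *\<^sub>R A) * (exp (u *\<^sub>R A) * A) + (- A) * exp (u *\<^sub>R A)) (at u within S)"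
    by (intro has_vector_derivative_mult exp_scaleR_has_vector_derivative_right)
      (auto intro!: derivative_eq_intros)
  then show ?thesis
    by (simp add: algebra_simps exp_times_scaleR_commute)
qed

lemma norm_mult_exp_mult_le:
  fixes A :: "'a::{real_normed_algebra_1,banach}"
  assumes "0 \<le> u" "u \<le> 1"
  shows "norm (A * exp (u *\<^sub>R A) * A) \<le> (norm A)\<^sup>2 * exp (norm A)"
proof -
  have "norm (exp (u *\<^sub>R A)) \<le> exp (norm (u *\<^sub>R A))"
    by (rule norm_exp)
  also have "\<dots> \<le> exp (norm A)"
    using assms by (simp add: mult_left_le_one_le)
  finally have exp_le: "norm (exp (u *\<^sub>R A)) \<le> exp (norm A)" .
  have "norm (A * exp (u *\<^sub>R A) * A) \<le> norm (A * exp (u *\<^sub>R A)) * norm A"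
    by (rule norm_mult_ineq)
  also have "\<dots> \<le> norm A * norm (exp (u *\<^sub>R A)) * norm A"
    by (intro mult_right_mono norm_mult_ineq) auto
  also have "\<dots> \<le> norm A * exp (norm A) * norm A"
    using exp_le by (intro mult_right_mono mult_left_mono) auto
  finally show ?thesis
    by (simp add: power2_eq_square mult_ac)
qed

lemma norm_resolvent_exp_sub_one:
  fixes A :: "'a::{real_normed_algebra_1,banach}"
  assumes "0 \<le> d" "d \<le> 1"
  shows "norm ((1 - d *\<^sub>R A) * exp (d *\<^sub>R A) - 1) \<le> d\<^sup>2 * ((norm A)\<^sup>2 * exp (norm A))"
proof -
  define f' where "f' u = - (u *\<^sub>R (A * exp (u *\<^sub>R A) * A))" for u
  have "norm (f' u - f' 0) \<le> d * ((norm A)\<^sup>2 * exp (norm A))" if "u \<in> {0..d}" for u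
    using that assms norm_mult_exp_mult_le[of u A] by (simp add: f'_def) (rule mult_mono, auto)
  then have "norm ((1 - d *\<^sub>R A) * exp (d *\<^sub>R A) - (1 - 0 *\<^sub>R A) * exp (0 *\<^sub>R A) - (d - 0) *\<^sub>R f' 0)
      \<le> norm (d - 0) * (d * ((norm A)\<^sup>2 * exp (norm A)))"
    using assms(1)
    by (intro vector_differentiable_bound_linearization[where S = "{0..d}"])
      (auto simp: f'_def closed_segment_eq_real_ivl intro: has_vector_derivative_resolvent_exp)
  then show ?thesis
    using assms(1) by (simp add: f'_def power2_eq_square mult.assoc)
qed

lemma power_one_add_sq_le_exp:
  fixes K s :: real
  assumes "0 \<le> K" "1 \<le> n"
  shows "(1 + K * (s / real n)\<^sup>2) ^ n \<le> exp (K * s\<^sup>2 / real n)"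
proof -
  have "(1 + K * (s / real n)\<^sup>2) ^ n \<le> exp (K * (s / real n)\<^sup>2) ^ n"
    using assms(1) by (intro power_mono) auto
  also have "\<dots> = exp (K * s\<^sup>2 / real n)"
    using assms(2) by (simp add: power2_eq_square field_simps flip: exp_of_nat_mult)
  finally show ?thesis .
qed

lemma le_of_le_exp_div_nat:
  fixes x y c :: real
  assumes "\<And>n. N \<le> n \<Longrightarrow> x \<le> exp (c / real n) * y"
  shows "x \<le> y"
proof -
  have "(\<lambda>n. exp (c / real n) * y) \<longlonglongrightarrow> exp 0 * y"
    by (intro tendsto_intros)
  then have "x \<le> exp 0 * y"
    using assms by (intro LIMSEQ_le_const) auto
  then show ?thesis
    by simp
qed

lemma pascal_sum_scaleR:
  fixes g :: "nat \<Rightarrow> nat \<Rightarrow> 'a::real_vector"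
  shows "(\<Sum>j\<le>m. real (m choose j) *\<^sub>R (g (Suc j) (m - j) + g j (Suc (m - j)))) =
    (\<Sum>j\<le>Suc m. real (Suc m choose j) *\<^sub>R g j (Suc m - j))"
proof -
  have "(\<Sum>j\<le>Suc m. real (Suc m choose j) *\<^sub>R g j (Suc m - j)) =
      g 0 (Suc m) + (\<Sum>j\<le>m. real (Suc m choose Suc j) *\<^sub>R g (Suc j) (m - j))"
    unfolding sum.atMost_Suc_shift by simp
  also have "\<dots> = (\<Sum>j\<le>m. real (m choose j) *\<^sub>R g (Suc j) (m - j))
      + (g 0 (Suc m) + (\<Sum>j\<le>m. real (m choose Suc j) *\<^sub>R g (Suc j) (m - j)))"
    by (simp add: scaleR_add_left sum.distrib)
  also have "g 0 (Suc m) + (\<Sum>j\<le>m. real (m choose Suc j) *\<^sub>R g (Suc j) (m - j)) =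
      (\<Sum>j\<le>Suc m. real (m choose j) *\<^sub>R g j (Suc m - j))"
    unfolding sum.atMost_Suc_shift by simp
  also have "\<dots> = (\<Sum>j\<le>m. real (m choose j) *\<^sub>R g j (Suc (m - j)))"
    by (simp add: Suc_diff_le)
  finally show ?thesis
    by (simp add: scaleR_add_right sum.distrib)
qed

text \<open>
  \<^term>\<open>exp_prod_deriv m bs s\<close> is the m-th derivative in s of the ordered product of the
  \<^term>\<open>exp (s *\<^sub>R b)\<close> over b in bs, computed by the Leibniz rule.
\<close>

fun exp_prod_deriv :: "nat \<Rightarrow> 'a list \<Rightarrow> real \<Rightarrow> 'a::{real_normed_algebra_1,banach}" where
  "exp_prod_deriv m [] s = (if m = 0 then 1 else 0)"
| "exp_prod_deriv m (b # bs) s =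
    (\<Sum>j\<le>m. real (m choose j) *\<^sub>R (exp (s *\<^sub>R b) * b ^ j * exp_prod_deriv (m - j) bs s))"

declare exp_prod_deriv.simps(2) [simp del]

lemma exp_prod_deriv_0: "exp_prod_deriv 0 bs s = prod_list (map (\<lambda>b. exp (s *\<^sub>R b)) bs)"
  by (induction bs) (simp_all add: exp_prod_deriv.simps)

lemma has_vector_derivative_exp_prod_deriv:
  "((\<lambda>s. exp_prod_deriv m bs s) has_vector_derivative exp_prod_deriv (Suc m) bs s) (at s)"
proof (induction bs arbitrary: m)
  case Nil
  then show ?case
    by (simp add: has_vector_derivative_const)
next
  case (Cons b bs)
  have term_deriv: "((\<lambda>s. exp (s *\<^sub>R b) * b ^ j * exp_prod_deriv k bs s) has_vector_derivative
      exp (s *\<^sub>R b) * b ^ Suc j * exp_prod_deriv k bs s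
      + exp (s *\<^sub>R b) * b ^ j * exp_prod_deriv (Suc k) bs s) (at s)"
    for j k
    using has_vector_derivative_mult[OF
        has_vector_derivative_mult_left[OF exp_scaleR_has_vector_derivative_right] Cons.IH]
    by (simp add: mult.assoc add.commute)
  then have "((\<lambda>s. exp_prod_deriv m (b # bs) s) has_vector_derivative
      (\<Sum>j\<le>m. real (m choose j) *\<^sub>R (exp (s *\<^sub>R b) * b ^ Suc j * exp_prod_deriv (m - j) bs s
        + exp (s *\<^sub>R b) * b ^ j * exp_prod_deriv (Suc (m - j)) bs s))) (at s)"
    unfolding exp_prod_deriv.simps
    by (intro has_vector_derivative_sum term_deriv
        bounded_linear.has_vector_derivative[OF bounded_linear_scaleR_right])
  then show ?case
    using pascal_sum_scaleR[of m "\<lambda>j k. exp (s *\<^sub>R b) * b ^ j * exp_prod_deriv k bs s"]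
    by (simp add: exp_prod_deriv.simps(2))
qed

lemma exp_prod_deriv_0_at_0 [simp]: "exp_prod_deriv 0 bs 0 = 1"
  by (induction bs) (simp_all add: exp_prod_deriv.simps)

lemma exp_prod_deriv_1_at_0 [simp]: "exp_prod_deriv 1 bs 0 = sum_list bs"
  by (induction bs) (simp_all add: exp_prod_deriv.simps)

lemma exp_prod_deriv_2_at_0_Cons:
  "exp_prod_deriv 2 (b # bs) 0 = b\<^sup>2 + 2 *\<^sub>R (b * sum_list bs) + exp_prod_deriv 2 bs 0"
  using exp_prod_deriv_1_at_0[of bs] by (simp add: exp_prod_deriv.simps numeral_2_eq_2)

lemma exp_prod_deriv_2_at_0_append:
  "exp_prod_deriv 2 (xs @ ys) 0 =
    exp_prod_deriv 2 xs 0 + 2 *\<^sub>R (sum_list xs * sum_list ys) + exp_prod_deriv 2 ys 0"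
  by (induction xs) (simp_all add: exp_prod_deriv_2_at_0_Cons algebra_simps)

lemma exp_prod_deriv_2_at_0_symmetric:
  "exp_prod_deriv 2 (xs @ rev xs) 0 = (sum_list (xs @ rev xs))\<^sup>2"
proof (induction xs)
  case (Cons x xs)
  define M where "M = xs @ rev xs"
  have "exp_prod_deriv 2 (x # (M @ [x])) 0 = (sum_list (x # (M @ [x])))\<^sup>2"
    using Cons.IH[folded M_def]
    by (simp add: exp_prod_deriv_2_at_0_Cons exp_prod_deriv_2_at_0_append power2_eq_square
        scaleR_2 algebra_simps)
  then show ?case
    by (simp add: M_def)
qed simp

definition splitting_error_deriv :: "nat \<Rightarrow> 'a list \<Rightarrow> real \<Rightarrow> 'a::{real_normed_algebra_1,banach}" where
  "splitting_error_deriv m bs s = exp (s *\<^sub>R sum_list bs) * sum_list bs ^ m - exp_prod_deriv m bs s"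

lemma splitting_error_deriv_0:
  "splitting_error_deriv 0 bs s = exp (s *\<^sub>R sum_list bs) - prod_list (map (\<lambda>b. exp (s *\<^sub>R b)) bs)"
  by (simp add: splitting_error_deriv_def exp_prod_deriv_0)

lemma has_vector_derivative_splitting_error_deriv:
  "(splitting_error_deriv m bs has_vector_derivative splitting_error_deriv (Suc m) bs s) (at s)"
  unfolding splitting_error_deriv_def[abs_def]
  by (intro has_vector_derivative_diff has_vector_derivative_exp_prod_deriv)
    (use has_vector_derivative_mult_left[OF exp_scaleR_has_vector_derivative_right] in \<open>simp add: mult.assoc\<close>)

lemma splitting_error_deriv_symmetric_at_0:
  assumes "m < 3"
  shows "splitting_error_deriv m (xs @ rev xs) 0 = 0"
proof -
  consider "m = 0" | "m = 1" | "m = 2"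
    using assms by linarith
  then show ?thesis
    by cases (simp_all add: splitting_error_deriv_def exp_prod_deriv_2_at_0_symmetric
        exp_prod_deriv_1_at_0[unfolded One_nat_def])
qed

lemma Maclaurin_bounded_linear:
  fixes F :: "nat \<Rightarrow> real \<Rightarrow> 'a::real_normed_vector" and l :: "'a \<Rightarrow> real"
  assumes "bounded_linear l" "0 < n" "0 < x"
    and "\<And>m t. m < n \<Longrightarrow> (F m has_vector_derivative F (Suc m) t) (at t)"
  obtains t where "0 < t" "t < x"
    "l (F 0 x) = (\<Sum>m<n. l (F m 0) / fact m * x ^ m) + l (F n t) / fact n * x ^ n"
proof -
  have "\<forall>m t. m < n \<and> 0 \<le> t \<and> t \<le> x \<longrightarrow> DERIV (\<lambda>t. l (F m t)) t :> l (F (Suc m) t)"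
    using bounded_linear.has_vector_derivative[OF assms(1) assms(4)]
    by (simp add: has_real_derivative_iff_has_vector_derivative)
  then show ?thesis
    using Maclaurin[OF assms(3,2) refl, of "\<lambda>m t. l (F m t)"] that by blast
qed

section \<open>Superoperators and their trace-norm bounds\<close>

text \<open>
  Bounded linear maps under composition; a separate type because \<^typ>\<open>'a \<Rightarrow>\<^sub>L 'a\<close> carries no
  algebra structure, which \<^const>\<open>exp\<close> needs.
\<close>

typedef (overloaded) ('a::euclidean_space) endo = "UNIV :: ('a \<Rightarrow>\<^sub>L 'a) set"
  morphisms endo_blinfun Abs_endo
  by simp

lemmas Abs_endo_inverse' [simp] = Abs_endo_inverse[OF UNIV_I]
   and endo_blinfun_inverse' [simp] = endo_blinfun_inverse

lemma endo_eq_iff: "a = b \<longleftrightarrow> endo_blinfun a = endo_blinfun b"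
  by (simp add: endo_blinfun_inject)

instantiation endo :: (euclidean_space) real_normed_algebra_1
begin

definition zero_endo_def: "0 = Abs_endo 0"
definition one_endo_def: "1 = Abs_endo id_blinfun"
definition plus_endo_def: "a + b = Abs_endo (endo_blinfun a + endo_blinfun b)"
definition minus_endo_def: "a - b = Abs_endo (endo_blinfun a - endo_blinfun b)"
definition uminus_endo_def: "- a = Abs_endo (- endo_blinfun a)"
definition times_endo_def: "a * b = Abs_endo (endo_blinfun a o\<^sub>L endo_blinfun b)"
definition scaleR_endo_def: "r *\<^sub>R a = Abs_endo (r *\<^sub>R endo_blinfun a)"
definition norm_endo_def: "norm a = norm (endo_blinfun a)"
definition sgn_endo_def: "sgn (a::'a endo) = inverse (norm a) *\<^sub>R a"
definition dist_endo_def: "dist (a::'a endo) b = norm (a - b)"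
definition uniformity_endo_def:
  "(uniformity :: ('a endo \<times> 'a endo) filter) = (INF e\<in>{0 <..}. principal {(x, y). dist x y < e})"
definition open_endo_def:
  "open (U :: 'a endo set) = (\<forall>x\<in>U. \<forall>\<^sub>F (x', y) in uniformity. x' = x \<longrightarrow> y \<in> U)"

lemma endo_blinfun_zero [simp]: "endo_blinfun 0 = 0"
  and endo_blinfun_one [simp]: "endo_blinfun 1 = id_blinfun"
  and endo_blinfun_plus [simp]: "endo_blinfun (a + b) = endo_blinfun a + endo_blinfun b"
  and endo_blinfun_minus [simp]: "endo_blinfun (a - b) = endo_blinfun a - endo_blinfun b"
  and endo_blinfun_uminus [simp]: "endo_blinfun (- a) = - endo_blinfun a"
  and endo_blinfun_times [simp]: "endo_blinfun (a * b) = endo_blinfun a o\<^sub>L endo_blinfun b"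
  and endo_blinfun_scaleR [simp]: "endo_blinfun (r *\<^sub>R a) = r *\<^sub>R endo_blinfun a"
  by (simp_all add: zero_endo_def one_endo_def plus_endo_def minus_endo_def uminus_endo_def
      times_endo_def scaleR_endo_def)

instance
proof
  fix a b c :: "'a endo" and r s :: real
  show "a + b + c = a + (b + c)" "a + b = b + a" "0 + a = a" "- a + a = 0" "a - b = a + - b"
    "r *\<^sub>R (a + b) = r *\<^sub>R a + r *\<^sub>R b" "(r + s) *\<^sub>R a = r *\<^sub>R a + s *\<^sub>R a"
    "r *\<^sub>R s *\<^sub>R a = (r * s) *\<^sub>R a" "1 *\<^sub>R a = a"
    by (simp_all add: endo_eq_iff algebra_simps)
  show "a * b * c = a * (b * c)" "(a + b) * c = a * c + b * c" "a * (b + c) = a * b + a * c"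
    "1 * a = a" "a * 1 = a" "r *\<^sub>R a * b = r *\<^sub>R (a * b)" "a * r *\<^sub>R b = r *\<^sub>R (a * b)"
    by (simp_all add: endo_eq_iff blinfun_eqI blinfun.bilinear_simps)
  have "(SOME i. i \<in> Basis) \<noteq> (0::'a)"
    using SOME_Basis nonzero_Basis by blast
  then have "id_blinfun \<noteq> (0 :: 'a \<Rightarrow>\<^sub>L 'a)"
    by (metis blinfun_apply_id_blinfun zero_blinfun.rep_eq)
  then show "(0::'a endo) \<noteq> 1"
    by (metis endo_blinfun_one endo_blinfun_zero)
  show "dist a b = norm (a - b)" "sgn a = inverse (norm a) *\<^sub>R a"
    by (simp_all add: dist_endo_def sgn_endo_def)
  show "(uniformity :: ('a endo \<times> 'a endo) filter) = (INF e\<in>{0 <..}. principal {(x, y). dist x y < e})"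
    by (simp add: uniformity_endo_def)
  show "open (U::'a endo set) = (\<forall>x\<in>U. \<forall>\<^sub>F (x', y) in uniformity. x' = x \<longrightarrow> y \<in> U)" for U
    by (simp add: open_endo_def)
  show "norm a = 0 \<longleftrightarrow> a = 0" "norm (a + b) \<le> norm a + norm b" "norm (r *\<^sub>R a) = \<bar>r\<bar> * norm a"
    "norm (1::'a endo) = 1" "norm (a * b) \<le> norm a * norm b"
    by (simp_all add: norm_endo_def endo_eq_iff norm_triangle_ineq norm_blinfun_compose)
qed

end

instance endo :: (euclidean_space) banach
proof
  fix X :: "nat \<Rightarrow> 'a endo"
  have dist: "dist a b = dist (endo_blinfun a) (endo_blinfun b)" for a b :: "'a endo"
    by (simp add: dist_norm norm_endo_def)
  assume "Cauchy X"
  then have "Cauchy (\<lambda>n. endo_blinfun (X n))"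
    unfolding Cauchy_def dist .
  then obtain l where "(\<lambda>n. endo_blinfun (X n)) \<longlonglongrightarrow> l"
    by (auto simp: convergent_def Cauchy_convergent_iff)
  then have "X \<longlonglongrightarrow> Abs_endo l"
    unfolding lim_sequentially dist by simp
  then show "convergent X"
    by (auto simp: convergent_def)
qed

definition endo_apply :: "'a::euclidean_space endo \<Rightarrow> 'a \<Rightarrow> 'a" where
  "endo_apply a = blinfun_apply (endo_blinfun a)"

definition endo_of :: "('a::euclidean_space \<Rightarrow> 'a) \<Rightarrow> 'a endo" where
  "endo_of f = Abs_endo (Blinfun f)"

lemma endo_apply_endo_of: "linear f \<Longrightarrow> endo_apply (endo_of f) = f"
  by (simp add: endo_apply_def endo_of_def bounded_linear_Blinfun_apply linear_conv_bounded_linear)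

lemma endo_eqI: "(\<And>x. endo_apply a x = endo_apply b x) \<Longrightarrow> a = b"
  by (simp add: endo_apply_def endo_eq_iff blinfun_eqI)

lemma endo_apply_zero [simp]: "endo_apply 0 = (\<lambda>x. 0)"
  and endo_apply_one [simp]: "endo_apply 1 = (\<lambda>x. x)"
  and endo_apply_times: "endo_apply (a * b) = (\<lambda>x. endo_apply a (endo_apply b x))"
  and endo_apply_plus: "endo_apply (a + b) = (\<lambda>x. endo_apply a x + endo_apply b x)"
  and endo_apply_minus: "endo_apply (a - b) = (\<lambda>x. endo_apply a x - endo_apply b x)"
  and endo_apply_scaleR: "endo_apply (r *\<^sub>R a) = (\<lambda>x. r *\<^sub>R endo_apply a x)"
  by (simp_all add: endo_apply_def fun_eq_iff blinfun.bilinear_simps)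

lemma endo_apply_sum: "endo_apply (\<Sum>k\<in>S. f k) = (\<lambda>x. \<Sum>k\<in>S. endo_apply (f k) x)"
  by (induction S rule: infinite_finite_induct) (simp_all add: endo_apply_plus)

lemma endo_apply_power: "endo_apply (a ^ n) = endo_apply a ^^ n"
  by (induction n) (simp_all add: endo_apply_times fun_eq_iff)

lemma norm_endo_apply_le: "norm (endo_apply a x) \<le> norm a * norm x"
  by (simp add: endo_apply_def norm_endo_def norm_blinfun)

lemma bounded_linear_endo_apply_left: "bounded_linear (\<lambda>a. endo_apply a x)"
  by (rule bounded_linear_intro[where K = "norm x"])
    (simp_all add: endo_apply_plus endo_apply_scaleR norm_endo_apply_le)

lemma endo_apply_exp: "endo_apply (exp a) x = (\<Sum>n. (1 / fact n) *\<^sub>R (endo_apply a ^^ n) x)"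
proof -
  have "endo_apply (exp a) x = (\<Sum>n. endo_apply (a ^ n /\<^sub>R fact n) x)"
    unfolding exp_def
    by (rule bounded_linear.suminf[OF bounded_linear_endo_apply_left summable_exp_generic])
  then show ?thesis
    by (simp add: endo_apply_scaleR endo_apply_power divide_inverse)
qed

lemma sexp_endo_apply: "sexp (endo_apply a) = endo_apply (exp a)"
  by (simp add: sexp_def endo_apply_exp fun_eq_iff)

lemma sexp_scaleR_linear: "linear L \<Longrightarrow> sexp (\<lambda>X. r *\<^sub>R L X) = endo_apply (exp (r *\<^sub>R endo_of L))"
  by (simp add: endo_apply_scaleR endo_apply_endo_of flip: sexp_endo_apply)

lemma endo_of_sum:
  assumes "\<And>k. k \<in> S \<Longrightarrow> linear (f k)"
  shows "endo_of (\<lambda>x. \<Sum>k\<in>S. f k x) = (\<Sum>k\<in>S. endo_of (f k))"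
  using assms by (intro endo_eqI) (simp add: endo_apply_sum endo_apply_endo_of linear_compose_sum)

definition tn_bounded :: "superop \<Rightarrow> real \<Rightarrow> bool" where
  "tn_bounded T c \<longleftrightarrow> (\<forall>X. trace_norm (T X) \<le> c * trace_norm X)"

lemma trace_norm_unit_exists: "\<exists>X::cmat2. trace_norm X = 1"
proof
  show "trace_norm (mat2 1 0 0 0) = 1"
    by (simp add: trace_norm_2x2 norm_sq_2x2 det_2)
qed

lemma tn_bounded_nonneg:
  assumes "tn_bounded T c"
  shows "0 \<le> c"
proof -
  obtain X :: cmat2 where "trace_norm X = 1"
    using trace_norm_unit_exists by blast
  moreover have "trace_norm (T X) \<le> c * trace_norm X"
    using assms unfolding tn_bounded_def by blast
  ultimately show ?thesis
    using trace_norm_nonneg[of "T X"] by simp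
qed

lemma tn_bounded_id: "tn_bounded (\<lambda>X. X) 1"
  by (simp add: tn_bounded_def)

lemma tn_bounded_zero: "tn_bounded (\<lambda>X. 0) 0"
  by (simp add: tn_bounded_def)

lemma tn_bounded_comp:
  assumes "tn_bounded S a" "tn_bounded T b"
  shows "tn_bounded (\<lambda>X. S (T X)) (a * b)"
  unfolding tn_bounded_def
proof
  fix X
  have "trace_norm (S (T X)) \<le> a * trace_norm (T X)"
    using assms(1) unfolding tn_bounded_def by blast
  also have "\<dots> \<le> a * (b * trace_norm X)"
    using assms tn_bounded_nonneg[OF assms(1)] unfolding tn_bounded_def
    by (simp add: mult_left_mono)
  finally show "trace_norm (S (T X)) \<le> a * b * trace_norm X"
    by (simp add: mult.assoc)
qed

lemma tn_bounded_add:
  assumes "tn_bounded S a" "tn_bounded T b"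
  shows "tn_bounded (\<lambda>X. S X + T X) (a + b)"
  unfolding tn_bounded_def
proof
  fix X
  have "trace_norm (S X + T X) \<le> trace_norm (S X) + trace_norm (T X)"
    by (rule trace_norm_triangle)
  also have "\<dots> \<le> (a + b) * trace_norm X"
    using assms unfolding tn_bounded_def by (simp add: add_mono distrib_right)
  finally show "trace_norm (S X + T X) \<le> (a + b) * trace_norm X" .
qed

lemma tn_bounded_scaleR:
  assumes "tn_bounded S a"
  shows "tn_bounded (\<lambda>X. r *\<^sub>R S X) (\<bar>r\<bar> * a)"
  using assms unfolding tn_bounded_def by (simp add: trace_norm_scaleR mult.assoc mult_left_mono)

lemma tn_bounded_diff:
  assumes "tn_bounded S a" "tn_bounded T b"
  shows "tn_bounded (\<lambda>X. S X - T X) (a + b)"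
  using tn_bounded_add[OF assms(1) tn_bounded_scaleR[OF assms(2), of "- 1"]] by simp

lemma tn_bounded_sum:
  assumes "finite S" "\<And>k. k \<in> S \<Longrightarrow> tn_bounded (F k) (c k)"
  shows "tn_bounded (\<lambda>X. \<Sum>k\<in>S. F k X) (\<Sum>k\<in>S. c k)"
  using assms
proof (induction S rule: finite_induct)
  case empty
  then show ?case
    by (simp add: tn_bounded_zero)
next
  case (insert x S)
  then show ?case
    using tn_bounded_add[of "F x" "c x" "\<lambda>X. \<Sum>k\<in>S. F k X" "\<Sum>k\<in>S. c k"] by simp
qed

lemma linear_tn_bounded:
  assumes "linear (T::superop)"
  obtains c where "tn_bounded T c"
proof -
  obtain B where B: "\<And>x. norm (T x) \<le> B * norm x"
    using linear_bounded[OF assms] by blast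
  have "trace_norm (T X) \<le> (sqrt 2 * \<bar>B\<bar>) * trace_norm X" for X
  proof -
    have "trace_norm (T X) \<le> sqrt 2 * norm (T X)"
      by (rule trace_norm_le_sqrt2_norm)
    also have "\<dots> \<le> sqrt 2 * (\<bar>B\<bar> * norm X)"
      using B[of X] abs_ge_self[of B] norm_ge_zero[of X]
      by (simp add: order_trans[OF _ mult_right_mono])
    also have "\<dots> \<le> sqrt 2 * (\<bar>B\<bar> * trace_norm X)"
      by (intro mult_left_mono norm_le_trace_norm) auto
    finally show ?thesis
      by (simp add: mult.assoc)
  qed
  then show ?thesis
    by (intro that[of "sqrt 2 * \<bar>B\<bar>"]) (simp add: tn_bounded_def)
qed

lemma tn_bounded_unit_sphere_le:
  assumes "tn_bounded T c" "y \<in> {trace_norm (T X) | X. trace_norm X = 1}"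
  shows "y \<le> c"
proof -
  obtain X where "y = trace_norm (T X)" "trace_norm X = 1"
    using assms(2) by blast
  moreover have "trace_norm (T X) \<le> c * trace_norm X"
    using assms(1) unfolding tn_bounded_def by blast
  ultimately show ?thesis
    by simp
qed

lemma norm11_le: "tn_bounded T c \<Longrightarrow> norm11 T \<le> c"
  unfolding norm11_def
  by (rule cSup_least) (use trace_norm_unit_exists tn_bounded_unit_sphere_le in blast)+

lemma tn_bounded_norm11:
  assumes "linear T"
  shows "tn_bounded T (norm11 T)"
  unfolding tn_bounded_def
proof
  fix X :: cmat2
  obtain c where c: "tn_bounded T c"
    using linear_tn_bounded[OF assms] by blast
  have bdd: "bdd_above {trace_norm (T X) | X. trace_norm X = 1}"
    using tn_bounded_unit_sphere_le[OF c] by (rule bdd_aboveI)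
  show "trace_norm (T X) \<le> norm11 T * trace_norm X"
  proof (cases "X = 0")
    case True
    then show ?thesis
      using linear_0[OF assms] by simp
  next
    case False
    define t where "t = trace_norm X"
    have t: "0 < t"
      using False trace_norm_nonneg[of X] by (simp add: t_def less_le)
    have "trace_norm ((1 / t) *\<^sub>R X) = 1"
      using t False by (simp add: trace_norm_scaleR t_def)
    then have "trace_norm (T ((1 / t) *\<^sub>R X)) \<le> norm11 T"
      unfolding norm11_def by (intro cSup_upper[OF _ bdd]) blast
    then show ?thesis
      using t by (simp add: linear_scale[OF assms] trace_norm_scaleR t_def field_simps)
  qed
qed

lemma tn_bounded_endo_mult:
  "tn_bounded (endo_apply a) c \<Longrightarrow> tn_bounded (endo_apply b) d \<Longrightarrow> tn_bounded (endo_apply (a * b)) (c * d)"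
  unfolding endo_apply_times by (rule tn_bounded_comp)

lemma tn_bounded_endo_power:
  "tn_bounded (endo_apply a) c \<Longrightarrow> tn_bounded (endo_apply (a ^ n)) (c ^ n)"
  by (induction n) (simp_all add: tn_bounded_id tn_bounded_endo_mult)

lemma tn_bounded_sum_list:
  assumes "list_all2 P bs cs" "\<And>b c. P b c \<Longrightarrow> tn_bounded (endo_apply b) c"
  shows "tn_bounded (endo_apply (sum_list bs)) (sum_list cs)"
  using assms(1)
proof (induction bs cs rule: list_all2_induct)
  case Nil
  then show ?case
    by (simp add: tn_bounded_zero)
next
  case (Cons b bs c cs)
  then show ?case
    using assms(2) by (simp add: endo_apply_plus tn_bounded_add)
qed

section \<open>Contraction semigroups and symmetric splittings\<close>

lemma trace_norm_endo_apply_le: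
  "trace_norm (endo_apply a X) \<le> sqrt 2 * (norm a * trace_norm (X::cmat2))"
proof -
  have "trace_norm (endo_apply a X) \<le> sqrt 2 * norm (endo_apply a X)"
    by (rule trace_norm_le_sqrt2_norm)
  also have "\<dots> \<le> sqrt 2 * (norm a * trace_norm X)"
    by (intro mult_left_mono order_trans[OF norm_endo_apply_le] norm_le_trace_norm norm_ge_zero) simp_all
  finally show ?thesis .
qed

lemma tn_bounded_exp_dissipative_step:
  assumes "linear G" "dissipative G"
  obtains K where "0 \<le> K"
    "\<And>d. 0 \<le> d \<Longrightarrow> d \<le> 1 \<Longrightarrow> tn_bounded (endo_apply (exp (d *\<^sub>R endo_of G))) (1 + K * d\<^sup>2)"
proof
  define A where "A = endo_of G"
  show "0 \<le> sqrt 2 * ((norm A)\<^sup>2 * exp (norm A))"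
    by simp
  fix d :: real
  assume d: "0 \<le> d" "d \<le> 1"
  define R where "R = (1 - d *\<^sub>R A) * exp (d *\<^sub>R A) - 1"
  have G: "endo_apply A = G"
    by (simp add: A_def endo_apply_endo_of assms(1))
  show "tn_bounded (endo_apply (exp (d *\<^sub>R A))) (1 + sqrt 2 * ((norm A)\<^sup>2 * exp (norm A)) * d\<^sup>2)"
    unfolding tn_bounded_def
  proof
    fix Z
    define Y where "Y = endo_apply (exp (d *\<^sub>R A)) Z"
    have "R = exp (d *\<^sub>R A) - d *\<^sub>R (A * exp (d *\<^sub>R A)) - 1"
      by (simp add: R_def algebra_simps)
    then have "Y - d *\<^sub>R G Y = Z + endo_apply R Z"
      by (simp add: Y_def G endo_apply_minus endo_apply_times endo_apply_scaleR)
    then have "trace_norm Y \<le> trace_norm (Z + endo_apply R Z)"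
      using trace_norm_le_resolvent[OF assms(2) d(1), of Y] by simp
    also have "\<dots> \<le> trace_norm Z + sqrt 2 * (norm R * trace_norm Z)"
      using trace_norm_triangle[of Z "endo_apply R Z"] trace_norm_endo_apply_le[of R Z] by linarith
    also have "\<dots> \<le> trace_norm Z + sqrt 2 * (d\<^sup>2 * ((norm A)\<^sup>2 * exp (norm A)) * trace_norm Z)"
      unfolding R_def
      by (intro add_left_mono mult_left_mono mult_right_mono norm_resolvent_exp_sub_one d
          trace_norm_nonneg) simp
    finally show "trace_norm Y \<le> (1 + sqrt 2 * ((norm A)\<^sup>2 * exp (norm A)) * d\<^sup>2) * trace_norm Z"
      by (simp add: algebra_simps)
  qed
qed

definition contraction_generator :: "cmat2 endo \<Rightarrow> bool" where
  "contraction_generator a \<longleftrightarrow> (\<forall>s\<ge>0. tn_bounded (endo_apply (exp (s *\<^sub>R a))) 1)"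

lemma contraction_generator_endo_of:
  assumes "linear G" "dissipative G"
  shows "contraction_generator (endo_of G)"
  unfolding contraction_generator_def tn_bounded_def
proof (intro allI impI)
  fix s :: real and X :: cmat2
  assume s: "0 \<le> s"
  define A where "A = endo_of G"
  obtain K where K: "0 \<le> K"
    "\<And>d. 0 \<le> d \<Longrightarrow> d \<le> 1 \<Longrightarrow> tn_bounded (endo_apply (exp (d *\<^sub>R A))) (1 + K * d\<^sup>2)"
    using tn_bounded_exp_dissipative_step[OF assms] unfolding A_def by blast
  have bound: "trace_norm (endo_apply (exp (s *\<^sub>R A)) X) \<le> exp (K * s\<^sup>2 / real n) * trace_norm X"
    if n: "1 \<le> n" "s \<le> real n" for n
  proof -
    define d where "d = s / real n"
    have d: "0 \<le> d" "d \<le> 1" "s *\<^sub>R A = real n *\<^sub>R (d *\<^sub>R A)"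
      using s n by (auto simp: d_def)
    have "tn_bounded (endo_apply (exp (s *\<^sub>R A))) ((1 + K * d\<^sup>2) ^ n)"
      unfolding d(3) exp_of_nat_scaleR by (rule tn_bounded_endo_power[OF K(2)[OF d(1,2)]])
    moreover have "(1 + K * d\<^sup>2) ^ n \<le> exp (K * s\<^sup>2 / real n)"
      unfolding d_def using K(1) n(1) by (rule power_one_add_sq_le_exp)
    ultimately show ?thesis
      unfolding tn_bounded_def by (meson mult_right_mono order_trans trace_norm_nonneg)
  qed
  show "trace_norm (endo_apply (exp (s *\<^sub>R A)) X) \<le> 1 * trace_norm X"
  proof (rule le_of_le_exp_div_nat)
    fix n
    assume "nat \<lceil>s\<rceil> + 1 \<le> n"
    then have "1 \<le> n" "s \<le> real n"
      by linarith+
    then show "trace_norm (endo_apply (exp (s *\<^sub>R A)) X) \<le> exp (K * s\<^sup>2 / real n) * (1 * trace_norm X)"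
      by (simp add: bound)
  qed
qed

lemma contraction_generator_scaleR:
  assumes "contraction_generator a" "0 \<le> r"
  shows "contraction_generator (r *\<^sub>R a)"
  using assms mult_nonneg_nonneg[of _ r] unfolding contraction_generator_def
  by (simp add: mult.commute)

lemma tn_bounded_exp_prod_deriv:
  assumes "list_all2 (\<lambda>b c. tn_bounded (endo_apply b) c \<and> contraction_generator b) bs cs" "0 \<le> s"
  shows "tn_bounded (endo_apply (exp_prod_deriv m bs s)) (sum_list cs ^ m)"
  using assms(1)
proof (induction bs cs arbitrary: m rule: list_all2_induct)
  case Nil
  then show ?case
    by (cases m) (simp_all add: tn_bounded_id tn_bounded_zero)
next
  case (Cons b bs c cs)
  have exp_b: "tn_bounded (endo_apply (exp (s *\<^sub>R b))) 1"
    using Cons.hyps(1) assms(2) by (simp add: contraction_generator_def)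
  have "tn_bounded (endo_apply (exp (s *\<^sub>R b) * b ^ j * exp_prod_deriv (m - j) bs s))
      (1 * c ^ j * sum_list cs ^ (m - j))" for j
    using Cons.hyps(1) Cons.IH by (intro tn_bounded_endo_mult tn_bounded_endo_power exp_b) auto
  then have "tn_bounded (endo_apply (exp_prod_deriv m (b # bs) s))
      (\<Sum>j\<le>m. \<bar>real (m choose j)\<bar> * (1 * c ^ j * sum_list cs ^ (m - j)))"
    unfolding exp_prod_deriv.simps(2) endo_apply_sum endo_apply_scaleR
    by (intro tn_bounded_sum tn_bounded_scaleR) auto
  then show ?case
    by (simp add: binomial_ring mult.assoc)
qed

lemma tn_bounded_splitting_error_deriv_3:
  assumes bounds: "list_all2 (\<lambda>b c. tn_bounded (endo_apply b) c \<and> contraction_generator b) bs cs"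
    and gen: "contraction_generator (sum_list bs)" and "0 \<le> s"
  shows "tn_bounded (endo_apply (splitting_error_deriv 3 bs s)) (2 * sum_list cs ^ 3)"
proof -
  have "tn_bounded (endo_apply (splitting_error_deriv 3 bs s)) (1 * sum_list cs ^ 3 + sum_list cs ^ 3)"
    unfolding splitting_error_deriv_def endo_apply_minus
  proof (intro tn_bounded_diff tn_bounded_endo_mult tn_bounded_endo_power)
    show "tn_bounded (endo_apply (exp (s *\<^sub>R sum_list bs))) 1"
      using gen \<open>0 \<le> s\<close> by (simp add: contraction_generator_def)
    show "tn_bounded (endo_apply (sum_list bs)) (sum_list cs)"
      using bounds by (rule tn_bounded_sum_list) simp
    show "tn_bounded (endo_apply (exp_prod_deriv 3 bs s)) (sum_list cs ^ 3)"
      using bounds \<open>0 \<le> s\<close> by (rule tn_bounded_exp_prod_deriv)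
  qed
  then show ?thesis
    by simp
qed

lemma symmetric_splitting_error:
  fixes xs :: "cmat2 endo list"
  defines "bs \<equiv> xs @ rev xs"
  assumes bounds: "list_all2 (\<lambda>b c. tn_bounded (endo_apply b) c \<and> contraction_generator b) bs cs"
    and gen: "contraction_generator (sum_list bs)"
    and "0 < \<tau>"
  shows "tn_bounded (endo_apply (exp (\<tau> *\<^sub>R sum_list bs) - prod_list (map (\<lambda>b. exp (\<tau> *\<^sub>R b)) bs)))
    (sum_list cs ^ 3 * \<tau> ^ 3 / 3)"
  unfolding tn_bounded_def
proof
  fix X :: cmat2
  define E where "E = endo_apply (splitting_error_deriv 0 bs \<tau>) X"
  obtain W where W: "unitary W" "Re (trace (W ** E)) = trace_norm E"
    by (rule trace_norm_polar_2x2)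
  define l where "l a = Re (trace (W ** endo_apply a X))" for a
  have bl: "bounded_linear l"
    unfolding l_def using bounded_linear_Re_trace_mult bounded_linear_endo_apply_left
    by (rule bounded_linear_compose)
  obtain \<xi> where \<xi>: "0 < \<xi>" "l (splitting_error_deriv 0 bs \<tau>) =
      (\<Sum>m<3. l (splitting_error_deriv m bs 0) / fact m * \<tau> ^ m)
      + l (splitting_error_deriv 3 bs \<xi>) / fact 3 * \<tau> ^ 3"
    using Maclaurin_bounded_linear[of l 3 \<tau> "\<lambda>m. splitting_error_deriv m bs", OF bl _ \<open>0 < \<tau>\<close>]
    by (auto intro: has_vector_derivative_splitting_error_deriv)
  have "(\<Sum>m<3. l (splitting_error_deriv m bs 0) / fact m * \<tau> ^ m) = 0"
    using linear_0[OF bounded_linear.linear[OF bl]]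
    by (simp add: bs_def splitting_error_deriv_symmetric_at_0)
  then have E: "trace_norm E = l (splitting_error_deriv 3 bs \<xi>) / 6 * \<tau> ^ 3"
    using \<xi>(2) W(2) by (simp add: l_def E_def fact_numeral)
  have "\<bar>l (splitting_error_deriv 3 bs \<xi>)\<bar> \<le> 2 * sum_list cs ^ 3 * trace_norm X"
    using abs_Re_trace_unitary_mult_le[OF W(1), of "endo_apply (splitting_error_deriv 3 bs \<xi>) X"]
      tn_bounded_splitting_error_deriv_3[OF bounds gen less_imp_le[OF \<xi>(1)]]
    unfolding l_def tn_bounded_def by (meson order_trans)
  then have "trace_norm E \<le> 2 * sum_list cs ^ 3 * trace_norm X / 6 * \<tau> ^ 3"
    unfolding E using \<open>0 < \<tau>\<close> by (intro mult_right_mono divide_right_mono) auto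
  then show "trace_norm (endo_apply (exp (\<tau> *\<^sub>R sum_list bs) - prod_list (map (\<lambda>b. exp (\<tau> *\<^sub>R b)) bs)) X)
      \<le> sum_list cs ^ 3 * \<tau> ^ 3 / 3 * trace_norm X"
    by (simp add: E_def splitting_error_deriv_0 mult_ac)
qed

lemma strang_splitting_error_endo:
  fixes a :: "nat \<Rightarrow> cmat2 endo" and n :: "nat \<Rightarrow> real"
  assumes gen: "\<And>k. k \<in> {0,1,2,3} \<Longrightarrow> contraction_generator (a k) \<and> tn_bounded (endo_apply (a k)) (n k)"
    and gen_sum: "contraction_generator (\<Sum>k\<in>{0,1,2,3}. a k)" and "0 < \<tau>"
  shows "tn_bounded (endo_apply (exp (\<tau> *\<^sub>R (\<Sum>k\<in>{0,1,2,3}. a k))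
      - exp ((\<tau>/2) *\<^sub>R a 0) * exp ((\<tau>/2) *\<^sub>R a 1) * exp ((\<tau>/2) *\<^sub>R a 2) * exp ((\<tau>/2) *\<^sub>R a 3)
      * exp ((\<tau>/2) *\<^sub>R a 3) * exp ((\<tau>/2) *\<^sub>R a 2) * exp ((\<tau>/2) *\<^sub>R a 1) * exp ((\<tau>/2) *\<^sub>R a 0)))
    ((\<tau> * (\<Sum>k\<in>{0,1,2,3}. n k)) ^ 3 / 3)"
proof -
  define xs where "xs = map (\<lambda>k. (1/2 :: real) *\<^sub>R a k) [0, 1, 2, 3]"
  define cs where "cs = map (\<lambda>k. n k / 2) [0, 1, 2, 3]"
  have "sum_list (xs @ rev xs) = 2 *\<^sub>R sum_list xs"
    by (simp add: scaleR_2)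
  also have "\<dots> = (\<Sum>k\<in>{0,1,2,3}. a k)"
    by (simp add: xs_def scaleR_add_right)
  moreover have "list_all2 (\<lambda>b c. tn_bounded (endo_apply b) c \<and> contraction_generator b)
      (xs @ rev xs) (cs @ rev cs)"
    using gen tn_bounded_scaleR[of "endo_apply (a _)" _ "1/2"] contraction_generator_scaleR[of "a _" "1/2"]
    by (simp add: xs_def cs_def endo_apply_scaleR)
  ultimately have "tn_bounded (endo_apply (exp (\<tau> *\<^sub>R (\<Sum>k\<in>{0,1,2,3}. a k))
      - prod_list (map (\<lambda>b. exp (\<tau> *\<^sub>R b)) (xs @ rev xs)))) (sum_list (cs @ rev cs) ^ 3 * \<tau> ^ 3 / 3)"
    using symmetric_splitting_error[of xs "cs @ rev cs" \<tau>] gen_sum \<open>0 < \<tau>\<close> by simp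
  then show ?thesis
    by (simp add: xs_def cs_def power_mult_distrib mult_ac)
qed

lemma strang_splitting_error:
  fixes L :: "nat \<Rightarrow> superop"
  assumes gens: "\<And>k. k \<in> {0,1,2,3} \<Longrightarrow> linear (L k) \<and> dissipative (L k)" and "0 < \<tau>"
  shows "norm11 (\<lambda>X. sexp (\<lambda>Y. \<tau> *\<^sub>R (\<Sum>k\<in>{0,1,2,3}. L k Y)) X
      - (sexp (\<lambda>X. (\<tau>/2) *\<^sub>R L 0 X) \<circ> sexp (\<lambda>X. (\<tau>/2) *\<^sub>R L 1 X) \<circ>
         sexp (\<lambda>X. (\<tau>/2) *\<^sub>R L 2 X) \<circ> sexp (\<lambda>X. (\<tau>/2) *\<^sub>R L 3 X) \<circ>
         sexp (\<lambda>X. (\<tau>/2) *\<^sub>R L 3 X) \<circ> sexp (\<lambda>X. (\<tau>/2) *\<^sub>R L 2 X) \<circ>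
         sexp (\<lambda>X. (\<tau>/2) *\<^sub>R L 1 X) \<circ> sexp (\<lambda>X. (\<tau>/2) *\<^sub>R L 0 X)) X)
    \<le> (\<tau> * (\<Sum>k\<in>{0,1,2,3}. norm11 (L k))) ^ 3 / 3"
proof -
  have lin_sum: "linear (\<lambda>Y. \<Sum>k\<in>{0,1,2,3}. L k Y)"
    using gens by (intro linear_compose_sum) auto
  have sum: "endo_of (\<lambda>Y. \<Sum>k\<in>{0,1,2,3}. L k Y) = (\<Sum>k\<in>{0,1,2,3}. endo_of (L k))"
    using gens by (intro endo_of_sum) auto
  have "contraction_generator (\<Sum>k\<in>{0,1,2,3}. endo_of (L k))"
    unfolding sum[symmetric] using lin_sum gens
    by (intro contraction_generator_endo_of dissipative_sum) auto
  then have "tn_bounded (endo_apply (exp (\<tau> *\<^sub>R (\<Sum>k\<in>{0,1,2,3}. endo_of (L k)))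
      - exp ((\<tau>/2) *\<^sub>R endo_of (L 0)) * exp ((\<tau>/2) *\<^sub>R endo_of (L 1)) * exp ((\<tau>/2) *\<^sub>R endo_of (L 2))
      * exp ((\<tau>/2) *\<^sub>R endo_of (L 3)) * exp ((\<tau>/2) *\<^sub>R endo_of (L 3)) * exp ((\<tau>/2) *\<^sub>R endo_of (L 2))
      * exp ((\<tau>/2) *\<^sub>R endo_of (L 1)) * exp ((\<tau>/2) *\<^sub>R endo_of (L 0))))
    ((\<tau> * (\<Sum>k\<in>{0,1,2,3}. norm11 (L k))) ^ 3 / 3)"
    using gens \<open>0 < \<tau>\<close>
    by (intro strang_splitting_error_endo)
      (simp_all add: contraction_generator_endo_of endo_apply_endo_of tn_bounded_norm11)
  moreover have "linear (L 0)" "linear (L 1)" "linear (L 2)" "linear (L 3)"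
    using gens by simp_all
  ultimately show ?thesis
    unfolding sexp_scaleR_linear[OF lin_sum] sum
    by (intro norm11_le) (simp add: sexp_scaleR_linear endo_apply_minus endo_apply_times comp_def)
qed

theorem lemma3:
  fixes H :: "complex^2^2" and A :: "complex^3^3"
    and lam :: "nat \<Rightarrow> real" and Ak :: "nat \<Rightarrow> complex^3^3" and v :: "nat \<Rightarrow> complex^3"
    and Lhat :: "nat \<Rightarrow> superop" and Lam :: real and S2 :: "real \<Rightarrow> superop"
    and t :: real and N :: nat
  assumes herm: "cadj H = H"
    and A_psd: "psd A"
    and orthonormal: "\<forall>k\<in>{1,2,3}. \<forall>l\<in>{1,2,3}.
         (\<Sum>i\<in>UNIV. cnj (v k $ i) * v l $ i) = (if k = l then 1 else 0)"
    and proj: "\<forall>k\<in>{1,2,3}. Ak k = outer (v k)"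
    and lam_nonneg: "\<forall>k\<in>{1,2,3}. lam k \<ge> 0"
    and spectral: "A = (\<Sum>k\<in>{1,2,3}. cscale (complex_of_real (lam k)) (Ak k))"
    and lam0: "lam 0 = 1"
    and Lhat0: "Lhat 0 = (\<lambda>\<rho>. cscale (complex_of_real (lam 0)) (L0 H \<rho>))"
    and Lhatk: "\<forall>k\<in>{1,2,3}. Lhat k = (\<lambda>\<rho>. cscale (complex_of_real (lam k)) (Lk (Ak k) \<rho>))"
    and Lam_def: "Lam = Max ((\<lambda>k. norm11 (Lhat k)) ` {0,1,2,3})"
    and S2_def: "\<forall>\<alpha>\<ge>0. S2 \<alpha> =
         sexp (\<lambda>X. (\<alpha>/2) *\<^sub>R Lhat 0 X) \<circ> sexp (\<lambda>X. (\<alpha>/2) *\<^sub>R Lhat 1 X) \<circ>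
         sexp (\<lambda>X. (\<alpha>/2) *\<^sub>R Lhat 2 X) \<circ> sexp (\<lambda>X. (\<alpha>/2) *\<^sub>R Lhat 3 X) \<circ>
         sexp (\<lambda>X. (\<alpha>/2) *\<^sub>R Lhat 3 X) \<circ> sexp (\<lambda>X. (\<alpha>/2) *\<^sub>R Lhat 2 X) \<circ>
         sexp (\<lambda>X. (\<alpha>/2) *\<^sub>R Lhat 1 X) \<circ> sexp (\<lambda>X. (\<alpha>/2) *\<^sub>R Lhat 0 X)"
    and t_pos: "t > 0"
    and N_pos: "N \<ge> 1"
  shows "norm11 (\<lambda>X. sexp (\<lambda>Y. (t / real N) *\<^sub>R (\<Sum>k\<in>{0,1,2,3}. Lhat k Y)) X
                     - S2 (t / real N) X)
         \<le> (4 * t * Lam) ^ 3 / (3 * real N ^ 3)"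
proof -
  have gens: "linear (Lhat k) \<and> dissipative (Lhat k)" if "k \<in> {0,1,2,3}" for k
  proof (cases "k = 0")
    case True
    then show ?thesis
      using herm by (simp add: Lhat0 lam0 linear_L0 dissipative_L0)
  next
    case False
    then show ?thesis
      using that Lhatk proj lam_nonneg by (auto simp: lindblad_generator_Lk_outer)
  qed
  have norm_k: "0 \<le> norm11 (Lhat k) \<and> norm11 (Lhat k) \<le> Lam" if "k \<in> {0,1,2,3}" for k
    using tn_bounded_nonneg[OF tn_bounded_norm11] gens[OF that] that unfolding Lam_def by auto
  have norms: "0 \<le> (\<Sum>k\<in>{0,1,2,3}. norm11 (Lhat k))" "(\<Sum>k\<in>{0,1,2,3}. norm11 (Lhat k)) \<le> 4 * Lam"
    using norm_k[of 0] norm_k[of 1] norm_k[of 2] norm_k[of 3] by simp_all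
  have \<tau>: "0 < t / real N"
    using t_pos N_pos by simp
  have "norm11 (\<lambda>X. sexp (\<lambda>Y. (t / real N) *\<^sub>R (\<Sum>k\<in>{0,1,2,3}. Lhat k Y)) X - S2 (t / real N) X)
      \<le> (t / real N * (\<Sum>k\<in>{0,1,2,3}. norm11 (Lhat k))) ^ 3 / 3"
    unfolding S2_def[rule_format, OF less_imp_le[OF \<tau>]]
    by (rule strang_splitting_error[of Lhat, OF gens \<tau>])
  also have "\<dots> \<le> (t / real N * (4 * Lam)) ^ 3 / 3"
    using norms t_pos
    by (intro divide_right_mono power_mono mult_left_mono mult_nonneg_nonneg) simp_all
  also have "\<dots> = (4 * t * Lam) ^ 3 / (3 * real N ^ 3)"
    by (simp add: power_divide power_mult_distrib)
  finally show ?thesis .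
qed

end
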